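(* Let $n \geq 1$. The C*-algebra $C^\ast(Q_n)$ is $2^{n-1}$-subhomogeneous, i.e. every irreducible representation of $C^\ast(Q_n)$ acts on a Hilbert space of dimension at most $2^{n-1}$. Moreover, for every irreducible representation $\rho$ of $C^\ast(Q_n)$ on a Hilbert space $\mathcal{H}$ and every vertex $x \in U_n \cup V_n$ one has $\dim(\rho(p_x)\mathcal{H}) \leq 1$.
   Context: For $n \geq 1$, identify each integer $0 \le i < 2^n$ with its $n$-digit binary representation $i_{n-1}\dots i_1 i_0$ (so $i = \sum_{k=0}^{n-1} i_k 2^k$, $i_k \in \{0,1\}$) and write $\mathrm{par}_k(i) = \sum_{\ell=0}^{k} i_\ell \bmod 2$. For $k<n$, $i \# k$ denotes the integer obtained from $i$ by flipping its $k$-th binary digit. The hypercube $Q_n$ is the bipartite graph with vertex sets $U_n = \{i < 2^n \mid \mathrm{par}_{n-1}(i) = 0\}$, $V_n = \{j < 2^n \mid \mathrm{par}_{n-1}(j)=1\}$, in which $i \in U_n$ and $j \in V_n$ are adjacent iff $j = i \# k$ for some $k<n$. The hypercube C*-algebra $C^\ast(Q_n)$ is the universal unital C*-algebra generated by projections $p_x$, $x \in U_n \cup V_n$, subject to $\sum_{u \in U_n} p_u = 1 = \sum_{v \in V_n} p_v$ and $p_u p_v = 0$ whenever $u \in U_n$, $v \in V_n$ are not adjacent in $Q_n$. *)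

theory Defs
  imports "HOL-Analysis.Analysis"
begin

text \<open>HOL-Analysis only provides real inner product spaces, so we introduce the class of
complex Hilbert spaces: a Banach space (complete normed space) carrying a complex scalar
multiplication compatible with the real one and a complex inner product (linear in the
second, conjugate-linear in the first argument) that induces the norm.\<close>

class complex_hilbert = banach +
  fixes scaleC :: "complex \<Rightarrow> 'a \<Rightarrow> 'a"
    and cinner :: "'a \<Rightarrow> 'a \<Rightarrow> complex"
  assumes scaleC_add_right: "scaleC a (x + y) = scaleC a x + scaleC a y"
    and scaleC_add_left: "scaleC (a + b) x = scaleC a x + scaleC b x"
    and scaleC_scaleC: "scaleC a (scaleC b x) = scaleC (a * b) x"
    and scaleC_one: "scaleC 1 x = x"
    and scaleR_scaleC: "scaleR r x = scaleC (complex_of_real r) x"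
    and cinner_commute: "cinner x y = cnj (cinner y x)"
    and cinner_add_left: "cinner (x + y) z = cinner x z + cinner y z"
    and cinner_scaleC_left: "cinner (scaleC a x) y = cnj a * cinner x y"
    and norm_cinner: "complex_of_real ((norm x)\<^sup>2) = cinner x x"

text \<open>Sanity check: the class is inhabited (the complex numbers form a complex Hilbert space).\<close>

instantiation complex :: complex_hilbert
begin
definition scaleC_complex :: "complex \<Rightarrow> complex \<Rightarrow> complex" where "scaleC_complex a x = a * x"
definition cinner_complex :: "complex \<Rightarrow> complex \<Rightarrow> complex" where "cinner_complex x y = cnj x * y"
instance
  proof
  fix a b :: complex and x y z :: complex and r :: real
  show "scaleC a (x + y) = scaleC a x + scaleC a y" by (simp add: scaleC_complex_def distrib_left)
  show "scaleC (a + b) x = scaleC a x + scaleC b x" by (simp add: scaleC_complex_def distrib_right)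
  show "scaleC a (scaleC b x) = scaleC (a * b) x" by (simp add: scaleC_complex_def mult.assoc)
  show "scaleC 1 x = x" by (simp add: scaleC_complex_def)
  show "scaleR r x = scaleC (complex_of_real r) x" by (simp add: scaleC_complex_def scaleR_conv_of_real)
  show "cinner x y = cnj (cinner y x)" by (simp add: cinner_complex_def mult.commute)
  show "cinner (x + y) z = cinner x z + cinner y z" by (simp add: cinner_complex_def distrib_right)
  show "cinner (scaleC a x) y = cnj a * cinner x y" by (simp add: cinner_complex_def scaleC_complex_def mult.assoc)
  show "complex_of_real ((norm x)\<^sup>2) = cinner x x" by (simp add: cinner_complex_def complex_norm_square[symmetric] mult.commute)
qed
end

abbreviation cdependent :: "'a::complex_hilbert set \<Rightarrow> bool" where
  "cdependent \<equiv> module.dependent scaleC"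

abbreviation csubspace :: "'a::complex_hilbert set \<Rightarrow> bool" where
  "csubspace \<equiv> module.subspace scaleC"

definition hdim_le :: "'a::complex_hilbert set \<Rightarrow> nat \<Rightarrow> bool" where
  "hdim_le S k \<longleftrightarrow> (\<forall>B. B \<subseteq> S \<and> \<not> cdependent B \<longrightarrow> finite B \<and> card B \<le> k)"

text \<open>Orthogonal projections (self-adjoint idempotent linear operators; these are
automatically bounded).\<close>

definition is_projection :: "('a::complex_hilbert \<Rightarrow> 'a) \<Rightarrow> bool" where
  "is_projection P \<longleftrightarrow>
     (\<forall>x y. P (x + y) = P x + P y) \<and> (\<forall>a x. P (scaleC a x) = scaleC a (P x)) \<and>
     (\<forall>x. P (P x) = P x) \<and> (\<forall>x y. cinner (P x) y = cinner x (P y))"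

definition par :: "nat \<Rightarrow> nat \<Rightarrow> nat" where
  "par k i = (\<Sum>l\<le>k. if bit i l then 1 else 0) mod 2"

definition hcU :: "nat \<Rightarrow> nat set" where
  "hcU n = {i. i < 2 ^ n \<and> par (n - 1) i = 0}"

definition hcV :: "nat \<Rightarrow> nat set" where
  "hcV n = {j. j < 2 ^ n \<and> par (n - 1) j = 1}"

definition hc_adj :: "nat \<Rightarrow> nat \<Rightarrow> nat \<Rightarrow> bool" where
  "hc_adj n u v \<longleftrightarrow> (\<exists>k<n. v = flip_bit k u)"

text \<open>By the universal property, representations of the universal unital C*-algebra
C*(Q_n) on a Hilbert space H correspond exactly to families (rho(p_x))_x of projections on H
satisfying the defining relations; we represent a representation by this family.\<close>

definition hc_rep :: "nat \<Rightarrow> (nat \<Rightarrow> 'a::complex_hilbert \<Rightarrow> 'a) \<Rightarrow> bool" where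
  "hc_rep n p \<longleftrightarrow>
     (\<forall>x \<in> hcU n \<union> hcV n. is_projection (p x)) \<and>
     (\<forall>h. (\<Sum>u\<in>hcU n. p u h) = h) \<and>
     (\<forall>h. (\<Sum>v\<in>hcV n. p v h) = h) \<and>
     (\<forall>u\<in>hcU n. \<forall>v\<in>hcV n. \<not> hc_adj n u v \<longrightarrow> (\<forall>h. p u (p v h) = 0))"

text \<open>Irreducibility: the Hilbert space is nonzero and the only closed subspaces invariant
under the representation (equivalently under all generators p_x) are {0} and H.\<close>

definition hc_irreducible :: "nat \<Rightarrow> (nat \<Rightarrow> 'a::complex_hilbert \<Rightarrow> 'a) \<Rightarrow> bool" where
  "hc_irreducible n p \<longleftrightarrow>
     (UNIV :: 'a set) \<noteq> {0} \<and>
     (\<forall>K. csubspace K \<and> closed K \<and> (\<forall>x \<in> hcU n \<union> hcV n. p x ` K \<subseteq> K)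
        \<longrightarrow> K = {0} \<or> K = UNIV)"

end

theory Submission
  imports Defs
begin

(* The relations of C*(Q_n) force p_a p_b p_c = - p_a p_b' p_c for every square a, b, c, b'
   of the cube (insert the partition of unity of the side of b between p_a and p_c). With these
   anticommuting squares, every compressed word p_u w p_u is rewritten, letter by letter, into
   a linear combination of products of the operators T_v = p_u p_v p_u (v adjacent to u), and
   the T_v commute with each other. In an irreducible representation each T_v must then be a
   scalar multiple of p_u: otherwise the positive and negative parts of T_v - c p_u, obtained
   from a power-series square root, would yield a proper closed invariant subspace. Hence every
   compressed word is a multiple of p_u, which forces rank p_u <= 1. As the p_u, u in U_n, sum
   to the identity and |U_n| = 2^(n-1), the whole space has dimension at most 2^(n-1). *)

section \<open>Complex inner product spaces\<close>

interpretation cvec: vector_space "scaleC :: complex \<Rightarrow> 'a::complex_hilbert \<Rightarrow> 'a"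
  by unfold_locales (auto simp: scaleC_add_right scaleC_add_left scaleC_scaleC scaleC_one)

lemma scaleC_minus_left: "scaleC (- a) (x::'a::complex_hilbert) = - scaleC a x"
  by (rule cvec.scale_minus_left)

lemma cinner_add_right: "cinner x (y + z) = cinner x y + cinner (x::'a::complex_hilbert) z"
  by (metis cinner_commute cinner_add_left complex_cnj_add)

lemma cinner_scaleC_right: "cinner x (scaleC a y) = a * cinner (x::'a::complex_hilbert) y"
  by (metis cinner_commute cinner_scaleC_left complex_cnj_cnj complex_cnj_mult)

lemma cinner_scaleR_left: "cinner (r *\<^sub>R x) y = of_real r * cinner x (y::'a::complex_hilbert)"
  by (simp only: scaleR_scaleC cinner_scaleC_left complex_cnj_complex_of_real)

lemma cinner_scaleR_right: "cinner x (r *\<^sub>R y) = of_real r * cinner x (y::'a::complex_hilbert)"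
  by (simp only: scaleR_scaleC cinner_scaleC_right)

lemma cinner_zero_left [simp]: "cinner 0 (x::'a::complex_hilbert) = 0"
  by (metis add_cancel_right_left cinner_add_left)

lemma cinner_zero_right [simp]: "cinner (x::'a::complex_hilbert) 0 = 0"
  by (metis cinner_commute cinner_zero_left complex_cnj_zero)

lemma cinner_minus_left: "cinner (- x) (y::'a::complex_hilbert) = - cinner x y"
  by (metis add.right_inverse cinner_add_left cinner_zero_left add_eq_0_iff)

lemma cinner_minus_right: "cinner x (- y::'a::complex_hilbert) = - cinner x y"
  by (metis add.right_inverse cinner_add_right cinner_zero_right add_eq_0_iff)

lemma cinner_diff_left: "cinner (x - y) (z::'a::complex_hilbert) = cinner x z - cinner y z"
  by (simp only: diff_conv_add_uminus cinner_add_left cinner_minus_left)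

lemma cinner_diff_right: "cinner x (y - z::'a::complex_hilbert) = cinner x y - cinner x z"
  by (simp only: diff_conv_add_uminus cinner_add_right cinner_minus_right)

lemma cinner_sum_right: "cinner y (\<Sum>i\<in>A. f i) = (\<Sum>i\<in>A. cinner (y::'a::complex_hilbert) (f i))"
  by (induction A rule: infinite_finite_induct) (auto simp: cinner_add_right)

lemma Re_cinner_self: "Re (cinner x (x::'a::complex_hilbert)) = (norm x)\<^sup>2"
  by (simp flip: norm_cinner)

lemma cinner_self_eq_0 [simp]: "cinner x (x::'a::complex_hilbert) = 0 \<longleftrightarrow> x = 0"
  by (simp flip: norm_cinner)

lemma norm_scaleC: "norm (scaleC a (x::'a::complex_hilbert)) = cmod a * norm x"
proof -
  have "complex_of_real ((norm (scaleC a x))\<^sup>2) = cnj a * a * complex_of_real ((norm x)\<^sup>2)"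
    unfolding norm_cinner by (simp add: cinner_scaleC_left cinner_scaleC_right)
  also have "cnj a * a = complex_of_real ((cmod a)\<^sup>2)"
    by (metis complex_norm_square mult.commute of_real_power)
  finally have "(norm (scaleC a x))\<^sup>2 = (cmod a * norm x)\<^sup>2"
    by (simp only: of_real_eq_iff flip: of_real_mult power_mult_distrib)
  then show ?thesis by (rule power2_eq_imp_eq) simp_all
qed

lemma norm_diff_square:
  "(norm (x - y))\<^sup>2 = (norm x)\<^sup>2 - 2 * Re (cinner x y) + (norm (y::'a::complex_hilbert))\<^sup>2"
proof -
  have "(norm (x - y))\<^sup>2 = Re (cinner (x - y) (x - y))"
    by (simp only: Re_cinner_self)
  also have "\<dots> = Re (cinner x x) - Re (cinner x y) - Re (cinner y x) + Re (cinner y y)"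
    by (simp add: cinner_diff_left cinner_diff_right)
  finally have "(norm (x - y))\<^sup>2 = \<dots>" .
  moreover have "Re (cinner y x) = Re (cinner x y)"
    by (subst cinner_commute) simp
  ultimately show ?thesis by (simp add: Re_cinner_self)
qed

lemma cmod_cinner_le: "cmod (cinner x y) \<le> norm x * norm (y::'a::complex_hilbert)"
proof (cases "y = 0")
  case True
  then show ?thesis by simp
next
  case False
  define t where "t = cinner y x / cinner y y"
  have yy: "cinner y y = of_real ((norm y)\<^sup>2)" and ny: "(norm y)\<^sup>2 > 0"
    using False by (simp_all flip: norm_cinner)
  have cc: "cnj (cinner y x) * cinner y x = of_real ((cmod (cinner y x))\<^sup>2)"
    by (metis complex_norm_square mult.commute of_real_power)
  \<comment> \<open>expand \<open>\<parallel>x - t y\<parallel>\<^sup>2 \<ge> 0\<close> for the optimal \<open>t\<close>\<close>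
  have "of_real ((norm (x - scaleC t y))\<^sup>2)
      = cinner x x - t * cinner x y - cnj t * cinner y x + cnj t * t * cinner y y"
    unfolding norm_cinner
    by (simp add: cinner_diff_left cinner_diff_right cinner_scaleC_left cinner_scaleC_right
        algebra_simps)
  also have "\<dots> = cinner x x - cnj (cinner y x) * cinner y x / cinner y y"
    using ny unfolding t_def cinner_commute[of x y] yy by (simp add: field_simps)
  also have "\<dots> = of_real ((norm x)\<^sup>2 - (cmod (cinner y x))\<^sup>2 / (norm y)\<^sup>2)"
    by (simp only: of_real_diff of_real_divide yy cc flip: norm_cinner)
  finally have "(cmod (cinner y x))\<^sup>2 / (norm y)\<^sup>2 \<le> (norm x)\<^sup>2"
    by (metis diff_ge_0_iff_ge of_real_eq_iff zero_le_power2)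
  then have "(cmod (cinner y x))\<^sup>2 \<le> (norm x * norm y)\<^sup>2"
    using ny by (simp add: field_simps power_mult_distrib)
  then show ?thesis
    by (metis cinner_commute complex_mod_cnj norm_ge_zero power2_le_imp_le zero_le_mult_iff)
qed

lemma bounded_linear_cinner_right: "bounded_linear (cinner (x::'a::complex_hilbert))"
proof (rule bounded_linear_intro[where K="norm x"])
  show "cinner x (r *\<^sub>R y) = r *\<^sub>R cinner x y" for r and y :: 'a
    by (simp add: cinner_scaleR_right scaleR_conv_of_real)
  show "norm (cinner x y) \<le> norm y * norm x" for y
    using cmod_cinner_le[of x y] by (simp add: mult.commute)
qed (rule cinner_add_right)

lemma bounded_linear_cinner_left: "bounded_linear (\<lambda>y. cinner y (x::'a::complex_hilbert))"
proof (rule bounded_linear_intro[where K="norm x"])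
  show "cinner (r *\<^sub>R y) x = r *\<^sub>R cinner y x" for r and y :: 'a
    by (simp add: cinner_scaleR_left scaleR_conv_of_real)
  show "norm (cinner y x) \<le> norm y * norm x" for y
    by (rule cmod_cinner_le)
qed (rule cinner_add_left)

lemma hdim_le_of_subset_span:
  assumes "finite E" "S \<subseteq> cvec.span E" "card E \<le> k"
  shows "hdim_le S k"
  unfolding hdim_le_def using cvec.independent_span_bound[OF assms(1)] assms(2,3) by fastforce

lemma hdim_le_of_rank_one_partition:
  fixes P :: "'i \<Rightarrow> 'a::complex_hilbert \<Rightarrow> 'a"
  assumes I: "finite I" and sum: "\<And>h. (\<Sum>i\<in>I. P i h) = h"
    and rank: "\<And>i. i \<in> I \<Longrightarrow> \<exists>e. range (P i) \<subseteq> cvec.span {e}"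
  shows "hdim_le (UNIV :: 'a set) (card I)"
proof -
  obtain E where E: "\<And>i. i \<in> I \<Longrightarrow> range (P i) \<subseteq> cvec.span {E i}"
    using rank by metis
  have "UNIV \<subseteq> cvec.span (E ` I)"
  proof
    fix h :: 'a
    have "P i h \<in> cvec.span (E ` I)" if "i \<in> I" for i
      using E[OF that] cvec.span_mono[of "{E i}" "E ` I"] that by auto
    then have "(\<Sum>i\<in>I. P i h) \<in> cvec.span (E ` I)" by (rule cvec.span_sum)
    then show "h \<in> cvec.span (E ` I)" by (simp only: sum)
  qed
  then show ?thesis
    by (rule hdim_le_of_subset_span[rotated]) (simp_all add: I card_image_le)
qed

section \<open>Bounded complex-linear operators\<close>

definition bounded_clinear :: "('a::complex_hilbert \<Rightarrow> 'a) \<Rightarrow> bool" where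
  "bounded_clinear f \<longleftrightarrow> (\<forall>x y. f (x + y) = f x + f y) \<and> (\<forall>a x. f (scaleC a x) = scaleC a (f x)) \<and>
     (\<exists>K. \<forall>x. norm (f x) \<le> norm x * K)"

definition selfadjoint :: "('a::complex_hilbert \<Rightarrow> 'a) \<Rightarrow> bool" where
  "selfadjoint f \<longleftrightarrow> (\<forall>x y. cinner (f x) y = cinner x (f y))"

lemma clinear_add: "bounded_clinear f \<Longrightarrow> f (x + y) = f x + f y"
  by (simp add: bounded_clinear_def)

lemma clinear_scaleC: "bounded_clinear f \<Longrightarrow> f (scaleC a x) = scaleC a (f x)"
  by (simp add: bounded_clinear_def)

lemma clinear_scaleR: "bounded_clinear f \<Longrightarrow> f (r *\<^sub>R x) = r *\<^sub>R f x"
  by (simp only: scaleR_scaleC clinear_scaleC)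

lemma bounded_clinear_imp_bounded_linear: "bounded_clinear f \<Longrightarrow> bounded_linear f"
  unfolding bounded_clinear_def
  by (metis (no_types, lifting) bounded_linear_intro scaleR_scaleC)

lemma clinear_zero: "bounded_clinear f \<Longrightarrow> f 0 = 0"
  by (metis bounded_clinear_imp_bounded_linear linear_simps(3) bounded_linear.linear)

lemma clinear_minus: "bounded_clinear f \<Longrightarrow> f (- x) = - f x"
  by (metis bounded_clinear_imp_bounded_linear linear_simps(4) bounded_linear.linear)

lemma clinear_diff: "bounded_clinear f \<Longrightarrow> f (x - y) = f x - f y"
  by (metis bounded_clinear_imp_bounded_linear linear_simps(2) bounded_linear.linear)

lemma clinear_sum: "bounded_clinear f \<Longrightarrow> f (\<Sum>i\<in>A. g i) = (\<Sum>i\<in>A. f (g i))"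
  by (metis bounded_clinear_imp_bounded_linear linear_sum bounded_linear.linear)

lemma clinear_sums: "bounded_clinear f \<Longrightarrow> g sums l \<Longrightarrow> (\<lambda>n. f (g n)) sums (f l)"
  using bounded_clinear_imp_bounded_linear bounded_linear.sums by blast

lemma bounded_clinear_id: "bounded_clinear (\<lambda>x. x)"
  by (auto simp: bounded_clinear_def intro: exI[of _ 1])

lemma bounded_clinear_zero: "bounded_clinear (\<lambda>x. 0)"
  by (auto simp: bounded_clinear_def intro: exI[of _ 0])

lemma bounded_clinear_compose:
  assumes f: "bounded_clinear f" and g: "bounded_clinear g"
  shows "bounded_clinear (\<lambda>x. f (g x))"
proof -
  obtain K where K: "\<And>x. norm (f x) \<le> norm x * K" using f by (auto simp: bounded_clinear_def)
  obtain L where L: "\<And>x. norm (g x) \<le> norm x * L" using g by (auto simp: bounded_clinear_def)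
  have "norm (f (g x)) \<le> norm x * (L * \<bar>K\<bar>)" for x
  proof -
    have "norm (f (g x)) \<le> norm (g x) * \<bar>K\<bar>"
      by (rule order_trans[OF K]) (simp add: mult_left_mono)
    also have "\<dots> \<le> (norm x * L) * \<bar>K\<bar>" using L[of x] by (rule mult_right_mono) simp
    finally show ?thesis by (simp add: mult.assoc)
  qed
  then show ?thesis using f g by (auto simp: bounded_clinear_def)
qed

lemma bounded_clinear_comp: "bounded_clinear f \<Longrightarrow> bounded_clinear g \<Longrightarrow> bounded_clinear (f \<circ> g)"
  unfolding comp_def by (rule bounded_clinear_compose)

lemma bounded_clinear_add:
  assumes f: "bounded_clinear f" and g: "bounded_clinear g"
  shows "bounded_clinear (\<lambda>x. f x + g x)"
proof -
  obtain K where K: "\<And>x. norm (f x) \<le> norm x * K" using f by (auto simp: bounded_clinear_def)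
  obtain L where L: "\<And>x. norm (g x) \<le> norm x * L" using g by (auto simp: bounded_clinear_def)
  have "norm (f x + g x) \<le> norm x * (K + L)" for x
    using norm_triangle_ineq[of "f x" "g x"] K[of x] L[of x] by (simp add: algebra_simps)
  then show ?thesis using f g by (auto simp: bounded_clinear_def scaleC_add_right)
qed

lemma bounded_clinear_scaleC:
  assumes f: "bounded_clinear f"
  shows "bounded_clinear (\<lambda>x. scaleC c (f x))"
proof -
  obtain K where K: "\<And>x. norm (f x) \<le> norm x * K" using f by (auto simp: bounded_clinear_def)
  have "norm (scaleC c (f x)) \<le> norm x * (cmod c * K)" for x
    using mult_left_mono[OF K[of x], of "cmod c"] by (simp add: norm_scaleC mult.left_commute)
  then have "\<exists>K. \<forall>x. norm (scaleC c (f x)) \<le> norm x * K" by blast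
  then show ?thesis
    using f by (auto simp: bounded_clinear_def scaleC_add_right scaleC_scaleC mult.commute)
qed

lemma bounded_clinear_scaleR: "bounded_clinear f \<Longrightarrow> bounded_clinear (\<lambda>x. r *\<^sub>R f x)"
  by (simp add: scaleR_scaleC bounded_clinear_scaleC)

lemma bounded_clinear_diff:
  "bounded_clinear f \<Longrightarrow> bounded_clinear g \<Longrightarrow> bounded_clinear (\<lambda>x. f x - g x)"
  using bounded_clinear_add[of f "\<lambda>x. scaleC (-1) (g x)"] bounded_clinear_scaleC[of g "-1"]
  by (simp add: scaleC_minus_left scaleC_one)

lemma bounded_clinear_funpow: "bounded_clinear f \<Longrightarrow> bounded_clinear (f ^^ k)"
  by (induction k) (simp_all add: bounded_clinear_id id_def bounded_clinear_comp)

lemma selfadjointD: "selfadjoint f \<Longrightarrow> cinner (f x) y = cinner x (f y)"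
  by (simp add: selfadjoint_def)

lemma selfadjoint_funpow: "selfadjoint f \<Longrightarrow> selfadjoint (f ^^ k)"
  by (induction k) (simp_all add: selfadjoint_def funpow_swap1)

lemma selfadjoint_diff:
  "selfadjoint f \<Longrightarrow> selfadjoint g \<Longrightarrow> selfadjoint (\<lambda>x. f x - r *\<^sub>R g x)"
  by (simp add: selfadjoint_def cinner_diff_left cinner_diff_right cinner_scaleR_left
      cinner_scaleR_right)

lemma selfadjoint_quadratic_real:
  assumes "selfadjoint f"
  shows "cinner x (f x) = of_real (Re (cinner x (f x)))"
proof -
  have "cnj (cinner x (f x)) = cinner x (f x)"
    by (metis cinner_commute selfadjointD[OF assms])
  then have "cinner x (f x) \<in> \<real>" by (simp add: Reals_cnj_iff)
  then show ?thesis by (simp add: of_real_Re)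
qed

lemma selfadjoint_Re_square: "selfadjoint f \<Longrightarrow> Re (cinner x (f (f x))) = (norm (f x))\<^sup>2"
  by (metis selfadjointD Re_cinner_self)

lemma projection_bounded_clinear:
  assumes "is_projection P"
  shows "bounded_clinear P"
proof -
  have "norm (P x) \<le> norm x" for x
  proof -
    have "(norm (P x))\<^sup>2 = cmod (cinner x (P x))"
      using assms unfolding is_projection_def
      by (metis norm_cinner norm_of_real abs_power2)
    also have "\<dots> \<le> norm x * norm (P x)" by (rule cmod_cinner_le)
    finally show ?thesis
      by (cases "P x = 0") (simp_all add: power2_eq_square)
  qed
  with assms show ?thesis
    unfolding bounded_clinear_def is_projection_def by (auto intro!: exI[of _ 1])
qed

lemma projection_selfadjoint: "is_projection P \<Longrightarrow> selfadjoint P"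
  by (simp add: is_projection_def selfadjoint_def)

lemma projection_idem: "is_projection P \<Longrightarrow> P (P x) = P x"
  by (simp add: is_projection_def)

lemma projection_sum_orthogonal:
  fixes P :: "'i \<Rightarrow> 'a::complex_hilbert \<Rightarrow> 'a"
  assumes fin: "finite I" and proj: "\<And>i. i \<in> I \<Longrightarrow> is_projection (P i)"
    and sum: "\<And>h. (\<Sum>i\<in>I. P i h) = h" and ij: "i \<in> I" "j \<in> I" "i \<noteq> j"
  shows "P i (P j h) = 0"
proof -
  define a where "a = P j h"
  have Pj: "P j a = a" unfolding a_def using projection_idem[OF proj[OF ij(2)]] .
  have "(norm a)\<^sup>2 = Re (cinner a (\<Sum>k\<in>I. P k a))" by (simp add: sum Re_cinner_self)
  also have "\<dots> = (\<Sum>k\<in>I. Re (cinner a (P k a)))" by (simp add: cinner_sum_right)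
  also have "\<dots> = (\<Sum>k\<in>I. (norm (P k a))\<^sup>2)"
  proof (rule sum.cong[OF refl])
    fix k assume "k \<in> I"
    then show "Re (cinner a (P k a)) = (norm (P k a))\<^sup>2"
      using selfadjoint_Re_square[OF projection_selfadjoint[OF proj], of k a]
        projection_idem[OF proj, of k a] by simp
  qed
  also have "\<dots> = (norm a)\<^sup>2 + (\<Sum>k\<in>I - {j}. (norm (P k a))\<^sup>2)"
    by (simp add: sum.remove[OF fin ij(2)] Pj)
  finally have "(\<Sum>k\<in>I - {j}. (norm (P k a))\<^sup>2) = 0" by simp
  then have "(norm (P i a))\<^sup>2 = 0"
    using fin ij by (subst (asm) sum_nonneg_eq_0_iff) auto
  then show ?thesis by (simp add: a_def)
qed

section \<open>Square roots of positive contractions\<close>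

text \<open>\<open>\<Sum>k. sqrt_coeff k * x ^ k\<close> is the Taylor series of \<open>1 - sqrt (1 - x)\<close>; the recursion is
  the coefficient form of \<open>f\<^sup>2 = 2 f - x\<close>.\<close>

function sqrt_coeff :: "nat \<Rightarrow> real" where
  "sqrt_coeff 0 = 0"
| "sqrt_coeff (Suc 0) = 1/2"
| "sqrt_coeff (Suc (Suc m)) =
     (\<Sum>i\<in>{1..Suc m}. sqrt_coeff i * sqrt_coeff (Suc (Suc m) - i)) / 2"
  by pat_completeness auto
termination by (relation "Wellfounded.measure id") auto

lemma sqrt_coeff_nonneg: "sqrt_coeff k \<ge> 0"
proof (induction k rule: sqrt_coeff.induct)
  case (3 m)
  show ?case
    unfolding sqrt_coeff.simps(3)
    by (intro divide_nonneg_pos sum_nonneg mult_nonneg_nonneg) (use 3 in auto)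
qed simp_all

lemma sqrt_coeff_convolution:
  "(\<Sum>i\<le>m. sqrt_coeff i * sqrt_coeff (m - i)) = 2 * sqrt_coeff m - (if m = 1 then 1 else 0)"
proof (cases "m \<ge> 2")
  case True
  then obtain k where m: "m = Suc (Suc k)" by (metis add_2_eq_Suc le_Suc_ex)
  have "{..m} = insert 0 (insert m {1..Suc k})" using m by auto
  then show ?thesis using m by simp
next
  case False
  then consider "m = 0" | "m = 1" by linarith
  then show ?thesis by cases simp_all
qed

lemma sqrt_coeff_partial_le_1: "(\<Sum>k<N. sqrt_coeff k) \<le> 1"
proof (induction N)
  case (Suc N)
  let ?c = "\<lambda>(i, j). sqrt_coeff i * sqrt_coeff j"
  show ?case
  proof (cases "N = 0")
    case False
    have "2 * (\<Sum>m<Suc N. sqrt_coeff m) - 1 = (\<Sum>m<Suc N. \<Sum>i\<le>m. sqrt_coeff i * sqrt_coeff (m - i))"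
      using False by (simp add: sqrt_coeff_convolution sum_subtractf sum_distrib_left sum.delta)
    also have "\<dots> = sum ?c {(i, j). i + j < Suc N}"
      by (rule sum.triangle_reindex[symmetric])
    also have "\<dots> = sum ?c {(i, j). i + j < Suc N \<and> i \<ge> 1 \<and> j \<ge> 1}"
      by (rule sum.mono_neutral_right)
        (auto intro: finite_subset[of _ "{..N} \<times> {..N}"] simp: Suc_le_eq,
          (metis gr0I sqrt_coeff.simps(1))+)
    also have "\<dots> \<le> sum ?c ({..<N} \<times> {..<N})"
      by (rule sum_mono2) (auto simp: sqrt_coeff_nonneg)
    also have "\<dots> = (\<Sum>k<N. sqrt_coeff k)\<^sup>2"
      by (simp add: sum.cartesian_product[symmetric] sum_product power2_eq_square)
    also have "\<dots> \<le> 1"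
      using Suc.IH by (simp add: power_le_one sum_nonneg sqrt_coeff_nonneg)
    finally show ?thesis by simp
  qed simp
qed simp

lemma summable_sqrt_coeff: "summable sqrt_coeff"
  by (rule summableI_nonneg_bounded[where x=1])
    (auto simp: sqrt_coeff_nonneg sqrt_coeff_partial_le_1)

lemma sqrt_coeff_sums: "sqrt_coeff sums 1"
proof -
  let ?s = "suminf sqrt_coeff"
  have ns: "summable (\<lambda>k. norm (sqrt_coeff k))"
    using summable_sqrt_coeff sqrt_coeff_nonneg by simp
  have "(\<lambda>m. \<Sum>i\<le>m. sqrt_coeff i * sqrt_coeff (m - i)) sums (?s * ?s)"
    by (rule Cauchy_product_sums[OF ns ns])
  moreover have "(\<lambda>m. 2 * sqrt_coeff m - (if m = 1 then 1 else 0)) sums (2 * ?s - 1)"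
    using sums_single[of 1 "\<lambda>_. 1::real"] summable_sqrt_coeff
    by (intro sums_diff sums_mult) (simp_all add: summable_sums)
  ultimately have "?s * ?s = 2 * ?s - 1"
    by (simp add: sqrt_coeff_convolution sums_unique2)
  then have "(?s - 1)\<^sup>2 = 0" by (simp add: power2_eq_square algebra_simps)
  then show ?thesis using summable_sqrt_coeff summable_sums by fastforce
qed

lemma summable_on_sqrt_coeff_product:
  "(\<lambda>(j, k). sqrt_coeff j * sqrt_coeff k) summable_on UNIV \<times> UNIV"
proof -
  have has_sum: "(sqrt_coeff has_sum 1) UNIV"
    by (rule sums_nonneg_imp_has_sum[OF sqrt_coeff_sums sqrt_coeff_nonneg])
  have row: "((\<lambda>k. norm (sqrt_coeff j * sqrt_coeff k)) has_sum sqrt_coeff j) UNIV" for j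
    using has_sum_cmult_right[OF has_sum, of "sqrt_coeff j"] sqrt_coeff_nonneg
    by (simp add: abs_mult)
  have "(\<lambda>x. norm ((\<lambda>(j, k). sqrt_coeff j * sqrt_coeff k) x)) summable_on (SIGMA j:UNIV. UNIV)"
  proof (rule iffD2[OF Infinite_Sum.abs_summable_on_Sigma_iff], intro conjI ballI)
    show "(\<lambda>k. norm ((\<lambda>(j, k). sqrt_coeff j * sqrt_coeff k) (j, k))) summable_on UNIV" for j
      using row[of j] unfolding summable_on_def by auto
    show "(\<lambda>j. norm (\<Sum>\<^sub>\<infinity>k. norm ((\<lambda>(j, k). sqrt_coeff j * sqrt_coeff k) (j, k)))) summable_on UNIV"
      using has_sum sqrt_coeff_nonneg unfolding prod.case infsumI[OF row] summable_on_def by auto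
  qed
  then show ?thesis by (rule abs_summable_summable)
qed

lemma norm_funpow_le:
  fixes B :: "'a::real_normed_vector \<Rightarrow> 'a"
  assumes "\<And>h. norm (B h) \<le> norm h"
  shows "norm ((B ^^ k) h) \<le> norm h"
proof (induction k)
  case (Suc k)
  then show ?case using assms[of "(B ^^ k) h"] by simp
qed simp

lemma funpow_commute: "(\<And>x. g (f x) = f (g x)) \<Longrightarrow> g ((f ^^ k) x) = (f ^^ k) (g x)"
  by (induction k) simp_all

definition one_minus_sqrt :: "('a::complex_hilbert \<Rightarrow> 'a) \<Rightarrow> 'a \<Rightarrow> 'a" where
  "one_minus_sqrt B h = (\<Sum>k. sqrt_coeff k *\<^sub>R (B ^^ k) h)"

context
  fixes B :: "'a::complex_hilbert \<Rightarrow> 'a"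
  assumes B: "bounded_clinear B" and B_contraction: "\<And>h. norm (B h) \<le> norm h"
begin

lemma norm_sqrt_coeff_term_le: "norm (sqrt_coeff k *\<^sub>R (B ^^ k) h) \<le> sqrt_coeff k * norm h"
  using norm_funpow_le[OF B_contraction]
  by (simp add: abs_of_nonneg[OF sqrt_coeff_nonneg] mult_left_mono sqrt_coeff_nonneg)

lemma summable_norm_sqrt_series: "summable (\<lambda>k. norm (sqrt_coeff k *\<^sub>R (B ^^ k) h))"
  by (rule summable_comparison_test'[OF summable_mult2[OF summable_sqrt_coeff, of "norm h"]])
    (metis abs_norm_cancel real_norm_def norm_sqrt_coeff_term_le)

lemma one_minus_sqrt_sums: "(\<lambda>k. sqrt_coeff k *\<^sub>R (B ^^ k) h) sums one_minus_sqrt B h"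
  unfolding one_minus_sqrt_def
  by (rule summable_sums[OF summable_norm_cancel[OF summable_norm_sqrt_series]])

lemma one_minus_sqrt_has_sum: "((\<lambda>k. sqrt_coeff k *\<^sub>R (B ^^ k) h) has_sum one_minus_sqrt B h) UNIV"
  by (rule norm_summable_imp_has_sum[OF summable_norm_sqrt_series one_minus_sqrt_sums])

lemma norm_one_minus_sqrt_le: "norm (one_minus_sqrt B h) \<le> norm h"
proof -
  have "norm (one_minus_sqrt B h) \<le> (\<Sum>k. norm (sqrt_coeff k *\<^sub>R (B ^^ k) h))"
    unfolding one_minus_sqrt_def by (rule summable_norm[OF summable_norm_sqrt_series])
  also have "\<dots> \<le> (\<Sum>k. sqrt_coeff k * norm h)"
    by (intro suminf_le norm_sqrt_coeff_term_le summable_norm_sqrt_series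
        summable_mult2 summable_sqrt_coeff)
  also have "\<dots> = norm h"
    using sums_mult2[OF sqrt_coeff_sums, of "norm h"] by (simp add: sums_iff)
  finally show ?thesis .
qed

lemma one_minus_sqrt_commute:
  assumes Z: "bounded_clinear Z" and ZB: "\<And>h. Z (B h) = B (Z h)"
  shows "Z (one_minus_sqrt B h) = one_minus_sqrt B (Z h)"
proof -
  have "(\<lambda>k. sqrt_coeff k *\<^sub>R (B ^^ k) (Z h)) sums Z (one_minus_sqrt B h)"
    using clinear_sums[OF Z one_minus_sqrt_sums, of h]
    by (simp add: clinear_scaleR[OF Z] funpow_commute[of Z B, OF ZB])
  then show ?thesis using one_minus_sqrt_sums sums_unique2 by blast
qed

lemma bounded_clinear_one_minus_sqrt: "bounded_clinear (one_minus_sqrt B)"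
proof -
  have "one_minus_sqrt B (x + y) = one_minus_sqrt B x + one_minus_sqrt B y" for x y
    using sums_add[OF one_minus_sqrt_sums[of x] one_minus_sqrt_sums[of y]]
      one_minus_sqrt_sums[of "x + y"]
    by (simp add: clinear_add[OF bounded_clinear_funpow[OF B]] scaleR_add_right sums_unique2)
  moreover have "one_minus_sqrt B (scaleC a x) = scaleC a (one_minus_sqrt B x)" for a x
    using one_minus_sqrt_commute[OF bounded_clinear_scaleC[OF bounded_clinear_id, of a]]
    by (simp add: clinear_scaleC[OF B])
  ultimately show ?thesis
    using norm_one_minus_sqrt_le by (auto simp: bounded_clinear_def intro!: exI[of _ 1])
qed

lemma selfadjoint_one_minus_sqrt:
  assumes "selfadjoint B"
  shows "selfadjoint (one_minus_sqrt B)"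
proof -
  have "cinner (one_minus_sqrt B x) y = cinner x (one_minus_sqrt B y)" for x y
  proof -
    have "(\<lambda>k. cinner (sqrt_coeff k *\<^sub>R (B ^^ k) x) y) sums cinner (one_minus_sqrt B x) y"
      by (rule bounded_linear.sums[OF bounded_linear_cinner_left one_minus_sqrt_sums])
    moreover have "(\<lambda>k. cinner x (sqrt_coeff k *\<^sub>R (B ^^ k) y)) sums cinner x (one_minus_sqrt B y)"
      by (rule bounded_linear.sums[OF bounded_linear_cinner_right one_minus_sqrt_sums])
    moreover have "cinner (sqrt_coeff k *\<^sub>R (B ^^ k) x) y
        = cinner x (sqrt_coeff k *\<^sub>R (B ^^ k) y)" for k
      by (simp add: cinner_scaleR_left cinner_scaleR_right
          selfadjointD[OF selfadjoint_funpow[OF assms]])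
    ultimately show ?thesis using sums_unique2 by auto
  qed
  then show ?thesis by (simp add: selfadjoint_def)
qed

lemma Re_cinner_one_minus_sqrt_le: "Re (cinner h (one_minus_sqrt B h)) \<le> (norm h)\<^sup>2"
proof -
  have "Re (cinner h (one_minus_sqrt B h)) \<le> cmod (cinner h (one_minus_sqrt B h))"
    by (rule complex_Re_le_cmod)
  also have "\<dots> \<le> norm h * norm (one_minus_sqrt B h)" by (rule cmod_cinner_le)
  also have "\<dots> \<le> norm h * norm h" by (simp add: mult_left_mono norm_one_minus_sqrt_le)
  finally show ?thesis by (simp add: power2_eq_square)
qed

text \<open>The double series \<open>\<Sum>j k. a\<^sub>j a\<^sub>k B\<^sup>j\<^sup>+\<^sup>k h\<close> converges absolutely: summing it by rows gives
  \<open>C (C h)\<close>, summing it along diagonals gives the Cauchy product.\<close>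

lemma one_minus_sqrt_Cauchy_product:
  "(\<lambda>m. (\<Sum>i\<le>m. sqrt_coeff i * sqrt_coeff (m - i)) *\<^sub>R (B ^^ m) h)
     sums one_minus_sqrt B (one_minus_sqrt B h)"
proof -
  let ?a = sqrt_coeff and ?C = "one_minus_sqrt B"
  define f where "f = (\<lambda>(j, k). (?a j * ?a k) *\<^sub>R (B ^^ (j + k)) h)"
  have "(\<lambda>x. norm (f x)) summable_on UNIV \<times> UNIV"
  proof (rule Infinite_Sum.abs_summable_on_comparison_test'
        [OF summable_on_cmult_left[OF summable_on_sqrt_coeff_product]])
    show "norm (f x) \<le> (\<lambda>(j, k). ?a j * ?a k) x * norm h" for x
      using norm_funpow_le[OF B_contraction]
      by (cases x) (simp add: f_def abs_mult abs_of_nonneg[OF sqrt_coeff_nonneg]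
          mult_left_mono[OF _ mult_nonneg_nonneg[OF sqrt_coeff_nonneg sqrt_coeff_nonneg]])
  qed
  then obtain S where S: "(f has_sum S) (UNIV \<times> UNIV)"
    using abs_summable_summable has_sum_infsum by blast
  have row: "((\<lambda>k. f (j, k)) has_sum ?a j *\<^sub>R (B ^^ j) (?C h)) UNIV" for j
  proof -
    have "bounded_linear (\<lambda>v. ?a j *\<^sub>R (B ^^ j) v)"
      by (intro bounded_clinear_imp_bounded_linear bounded_clinear_scaleR bounded_clinear_funpow B)
    from has_sum_bounded_linear[OF this one_minus_sqrt_has_sum] show ?thesis
      by (simp add: f_def clinear_scaleR[OF bounded_clinear_funpow[OF B]] funpow_add)
  qed
  have "((\<lambda>j. ?a j *\<^sub>R (B ^^ j) (?C h)) has_sum S) UNIV"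
    by (rule has_sum_SigmaD[OF S]) (rule row)
  then have "?C (?C h) = S"
    using one_minus_sqrt_has_sum by (rule has_sum_unique[rotated])
  have "((\<lambda>(m, i). f (i, m - i)) has_sum S) (SIGMA m:UNIV. {..m}) \<longleftrightarrow> (f has_sum S) (UNIV \<times> UNIV)"
    by (rule has_sum_reindex_bij_witness[where j="\<lambda>(m, i). (i, m - i)" and i="\<lambda>(j, k). (j + k, j)"])
      auto
  with S have "((\<lambda>(m, i). f (i, m - i)) has_sum S) (SIGMA m:UNIV. {..m})" by simp
  then have "((\<lambda>m. (\<Sum>i\<le>m. ?a i * ?a (m - i)) *\<^sub>R (B ^^ m) h) has_sum S) UNIV"
    by (rule has_sum_SigmaD) (auto simp: f_def scaleR_sum_left intro!: has_sum_finiteI sum.cong)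
  then show ?thesis using \<open>?C (?C h) = S\<close> by (simp add: has_sum_imp_sums)
qed

lemma one_minus_sqrt_square:
  "one_minus_sqrt B (one_minus_sqrt B h) = 2 *\<^sub>R one_minus_sqrt B h - B h"
proof -
  have "(\<lambda>m. (2 * sqrt_coeff m - (if m = 1 then 1 else 0)) *\<^sub>R (B ^^ m) h)
      = (\<lambda>m. 2 *\<^sub>R (sqrt_coeff m *\<^sub>R (B ^^ m) h) - (if m = 1 then (B ^^ m) h else 0))"
    by (simp add: fun_eq_iff scaleR_diff_left)
  then have "(\<lambda>m. (2 * sqrt_coeff m - (if m = 1 then 1 else 0)) *\<^sub>R (B ^^ m) h)
      sums (2 *\<^sub>R one_minus_sqrt B h - B h)"
    using sums_diff[OF sums_scaleR_right[OF one_minus_sqrt_sums[of h], of 2]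
        sums_single[of 1 "\<lambda>m. (B ^^ m) h"]] by simp
  then show ?thesis
    using one_minus_sqrt_Cauchy_product[of h] by (simp add: sqrt_coeff_convolution sums_unique2)
qed

end

lemma bounded_clinear_square_bound:
  assumes "bounded_clinear S"
  obtains c :: real where "c > 0" "\<And>h. c * (norm (S h))\<^sup>2 \<le> (norm h)\<^sup>2"
proof -
  obtain K where K: "\<And>h. norm (S h) \<le> norm h * K" using assms by (auto simp: bounded_clinear_def)
  define L where "L = K\<^sup>2 + 1"
  have L: "L > 0" unfolding L_def by (simp add: add_nonneg_pos)
  show ?thesis
  proof (rule that)
    show "inverse L > 0" using L by simp
    show "inverse L * (norm (S h))\<^sup>2 \<le> (norm h)\<^sup>2" for h
    proof -
      have "norm (S h) \<le> norm h * \<bar>K\<bar>" by (rule order_trans[OF K]) (simp add: mult_left_mono)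
      then have "(norm (S h))\<^sup>2 \<le> (norm h * \<bar>K\<bar>)\<^sup>2" by (rule power_mono) simp
      also have "\<dots> \<le> L * (norm h)\<^sup>2" unfolding L_def by (simp add: power_mult_distrib ring_distribs)
      finally show ?thesis using L by (simp add: field_simps)
    qed
  qed
qed

lemma norm_diff_scaled_square_le:
  assumes S_sa: "selfadjoint S" and c: "c \<ge> 0" and bound: "\<And>h. c * (norm (S h))\<^sup>2 \<le> (norm h)\<^sup>2"
  shows "norm (h - c *\<^sub>R S (S h)) \<le> norm h"
proof -
  have "(norm (h - c *\<^sub>R S (S h)))\<^sup>2
      = (norm h)\<^sup>2 - 2 * (c * (norm (S h))\<^sup>2) + c\<^sup>2 * (norm (S (S h)))\<^sup>2"
    using c by (simp add: norm_diff_square cinner_scaleR_right selfadjoint_Re_square[OF S_sa]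
        power_mult_distrib)
  moreover have "c\<^sup>2 * (norm (S (S h)))\<^sup>2 \<le> c * (norm (S h))\<^sup>2"
    using mult_left_mono[OF bound[of "S h"] c] by (simp add: power2_eq_square mult.assoc)
  moreover have "c * (norm (S h))\<^sup>2 \<ge> 0" using c by simp
  ultimately have "(norm (h - c *\<^sub>R S (S h)))\<^sup>2 \<le> (norm h)\<^sup>2" by linarith
  then show ?thesis by (rule power2_le_imp_le[OF _ norm_ge_zero])
qed

lemma sqrt_one_minus_contraction_exists:
  fixes B :: "'a::complex_hilbert \<Rightarrow> 'a"
  assumes B: "bounded_clinear B" and B_contraction: "\<And>h. norm (B h) \<le> norm h"
    and B_sa: "selfadjoint B"
  obtains Q where "bounded_clinear Q" "selfadjoint Q" "\<And>h. Q (Q h) = h - B h"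
    "\<And>h. Re (cinner h (Q h)) \<ge> 0"
    "\<And>Z h. bounded_clinear Z \<Longrightarrow> (\<And>h. Z (B h) = B (Z h)) \<Longrightarrow> Z (Q h) = Q (Z h)"
proof
  let ?C = "one_minus_sqrt B"
  note C = bounded_clinear_one_minus_sqrt[OF B B_contraction]
  show "bounded_clinear (\<lambda>h. h - ?C h)"
    by (intro bounded_clinear_diff bounded_clinear_id C)
  show "selfadjoint (\<lambda>h. h - ?C h)"
    using selfadjoint_one_minus_sqrt[OF B B_contraction B_sa]
    by (simp add: selfadjoint_def cinner_diff_left cinner_diff_right)
  show "(\<lambda>h. h - ?C h) (h - ?C h) = h - B h" for h
    using one_minus_sqrt_square[OF B B_contraction, of h]
    by (simp add: clinear_diff[OF C] scaleR_2 algebra_simps)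
  show "Re (cinner h (h - ?C h)) \<ge> 0" for h
    using Re_cinner_one_minus_sqrt_le[OF B B_contraction, of h]
    by (simp add: cinner_diff_right Re_cinner_self)
  show "Z (h - ?C h) = (\<lambda>h. h - ?C h) (Z h)"
    if "bounded_clinear Z" "\<And>h. Z (B h) = B (Z h)" for Z h
    using one_minus_sqrt_commute[OF B B_contraction that] by (simp add: clinear_diff[OF that(1)])
qed

lemma selfadjoint_abs_exists:
  fixes S :: "'a::complex_hilbert \<Rightarrow> 'a"
  assumes S: "bounded_clinear S" and S_sa: "selfadjoint S"
  obtains R where "bounded_clinear R" "selfadjoint R" "\<And>h. R (R h) = S (S h)"
    "\<And>h. Re (cinner h (R h)) \<ge> 0"
    "\<And>Z h. bounded_clinear Z \<Longrightarrow> (\<And>h. Z (S h) = S (Z h)) \<Longrightarrow> Z (R h) = R (Z h)"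
proof -
  obtain c where c: "c > 0" and bound: "\<And>h. c * (norm (S h))\<^sup>2 \<le> (norm h)\<^sup>2"
    using bounded_clinear_square_bound[OF S] by blast
  \<comment> \<open>\<open>B = 1 - c S\<^sup>2\<close> is a positive contraction, and \<open>R = sqrt (1 - B) / sqrt c\<close>\<close>
  define B where "B h = h - c *\<^sub>R S (S h)" for h
  have B: "bounded_clinear B"
    unfolding B_def[abs_def]
    by (intro bounded_clinear_diff bounded_clinear_id bounded_clinear_scaleR
        bounded_clinear_compose[OF S S])
  have B_sa: "selfadjoint B"
    unfolding B_def[abs_def]
    by (rule selfadjoint_diff) (simp_all add: selfadjoint_def selfadjointD[OF S_sa])
  have B_contraction: "norm (B h) \<le> norm h" for h
    unfolding B_def using norm_diff_scaled_square_le[OF S_sa _ bound] c by simp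
  obtain Q where Q: "bounded_clinear Q" "selfadjoint Q" and QQ: "\<And>h. Q (Q h) = h - B h"
    and Q_pos: "\<And>h. Re (cinner h (Q h)) \<ge> 0"
    and Q_comm: "\<And>Z h. bounded_clinear Z \<Longrightarrow> (\<And>h. Z (B h) = B (Z h)) \<Longrightarrow> Z (Q h) = Q (Z h)"
    using sqrt_one_minus_contraction_exists[OF B B_contraction B_sa] by blast
  define r where "r = inverse (sqrt c)"
  have r: "r > 0" "r * r * c = 1" using c by (simp_all add: r_def field_simps)
  show ?thesis
  proof
    show "bounded_clinear (\<lambda>h. r *\<^sub>R Q h)" by (rule bounded_clinear_scaleR[OF Q(1)])
    show "selfadjoint (\<lambda>h. r *\<^sub>R Q h)"
      using Q(2) by (simp add: selfadjoint_def cinner_scaleR_left cinner_scaleR_right)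
    show "r *\<^sub>R Q (r *\<^sub>R Q h) = S (S h)" for h
      using r by (simp add: clinear_scaleR[OF Q(1)] QQ B_def mult.assoc)
    show "Re (cinner h (r *\<^sub>R Q h)) \<ge> 0" for h
      using Q_pos[of h] r by (simp add: cinner_scaleR_right)
    show "Z (r *\<^sub>R Q h) = r *\<^sub>R Q (Z h)"
      if Z: "bounded_clinear Z" and ZS: "\<And>h. Z (S h) = S (Z h)" for Z h
      using Q_comm[OF Z, of h]
      by (simp add: B_def clinear_diff[OF Z] clinear_scaleR[OF Z] ZS)
  qed
qed

text \<open>Positive and negative part \<open>F = (\<bar>S\<bar> + S)/2\<close>, \<open>G = (\<bar>S\<bar> - S)/2\<close> of an indefinite
  self-adjoint operator; they stand in for the spectral projections of \<open>S\<close>.\<close>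

lemma indefinite_selfadjoint_split:
  fixes S :: "'a::complex_hilbert \<Rightarrow> 'a"
  assumes S: "bounded_clinear S" and S_sa: "selfadjoint S"
    and pos: "Re (cinner x (S x)) > 0" and neg: "Re (cinner y (S y)) < 0"
  obtains F G where "bounded_clinear F" "bounded_clinear G" "\<And>h. F (G h) = 0"
    "F x \<noteq> 0" "G y \<noteq> 0" "\<And>h. S h = 0 \<Longrightarrow> F h = 0" "\<And>h. S h = 0 \<Longrightarrow> G h = 0"
    "\<And>Z h. bounded_clinear Z \<Longrightarrow> (\<And>h. Z (S h) = S (Z h)) \<Longrightarrow> Z (F h) = F (Z h)"
    "\<And>Z h. bounded_clinear Z \<Longrightarrow> (\<And>h. Z (S h) = S (Z h)) \<Longrightarrow> Z (G h) = G (Z h)"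
proof -
  obtain R where R: "bounded_clinear R" and R_sa: "selfadjoint R" and RR: "\<And>h. R (R h) = S (S h)"
    and R_pos: "\<And>h. Re (cinner h (R h)) \<ge> 0"
    and R_comm: "\<And>Z h. bounded_clinear Z \<Longrightarrow> (\<And>h. Z (S h) = S (Z h)) \<Longrightarrow> Z (R h) = R (Z h)"
    using selfadjoint_abs_exists[OF S S_sa] by blast
  have RS: "R (S h) = S (R h)" for h using R_comm[OF S, of h] by simp
  define F where "F = (\<lambda>h. (1/2::real) *\<^sub>R (R h + S h))"
  define G where "G = (\<lambda>h. (1/2::real) *\<^sub>R (R h - S h))"
  have R_ker: "R h = 0" if "S h = 0" for h
    using selfadjoint_Re_square[OF R_sa, of h] RR[of h] that clinear_zero[OF S] by simp
  show ?thesis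
  proof
    show "bounded_clinear F" "bounded_clinear G"
      unfolding F_def G_def
      by (intro bounded_clinear_scaleR bounded_clinear_add bounded_clinear_diff R S)+
    show "F (G h) = 0" for h
      by (simp add: F_def G_def clinear_scaleR[OF R] clinear_scaleR[OF S] clinear_diff[OF R]
          clinear_diff[OF S] RR RS algebra_simps)
    show "F x \<noteq> 0"
    proof
      assume "F x = 0"
      then have "R x = - S x" by (simp add: F_def eq_neg_iff_add_eq_0)
      then show False using R_pos[of x] pos by (simp add: cinner_minus_right)
    qed
    show "G y \<noteq> 0"
    proof
      assume "G y = 0"
      then have "R y = S y" by (simp add: G_def)
      then show False using R_pos[of y] neg by simp
    qed
    show "F h = 0" "G h = 0" if "S h = 0" for h
      using R_ker[OF that] that by (simp_all add: F_def G_def)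
    show "Z (F h) = F (Z h)" "Z (G h) = G (Z h)"
      if Z: "bounded_clinear Z" and ZS: "\<And>h. Z (S h) = S (Z h)" for Z h
      using R_comm[OF Z ZS]
      by (simp_all add: F_def G_def clinear_scaleR[OF Z] clinear_add[OF Z] clinear_diff[OF Z] ZS)
  qed
qed

lemma quadratic_form_eq_0_imp_zero:
  assumes M: "bounded_clinear M" and q: "\<And>w. cinner w (M w) = 0"
  shows "M z = 0"
proof -
  have sym: "cinner x (M y) + cinner y (M x) = 0" for x y
    using q[of "x + y"] q[of x] q[of y]
    by (simp add: clinear_add[OF M] cinner_add_left cinner_add_right ac_simps)
  \<comment> \<open>polarization: replacing \<open>x\<close> by \<open>\<i> x\<close> turns the symmetric part into the antisymmetric one\<close>
  have "cinner x (M y) - cinner y (M x) = 0" for x y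
    using sym[of "scaleC \<i> x" y]
    by (simp add: clinear_scaleC[OF M] cinner_scaleC_left cinner_scaleC_right right_diff_distrib)
  then have "cinner (M z) (M z) = 0" using sym[of "M z" z] by simp
  then show ?thesis by simp
qed

lemma compression_quadratic_form_ne:
  fixes P T :: "'a::complex_hilbert \<Rightarrow> 'a"
  assumes P: "is_projection P" and T: "bounded_clinear T" and T_sa: "selfadjoint T"
    and TP: "\<And>h. T (P h) = T h" and PT: "\<And>h. P (T h) = T h"
    and not_multiple: "T \<noteq> (\<lambda>h. c *\<^sub>R P h)"
  obtains x where "P x = x" "Re (cinner x (T x - c *\<^sub>R P x)) \<noteq> 0"
proof -
  note P_lin = projection_bounded_clinear[OF P] and P_idem = projection_idem[OF P]
  define M where "M h = T h - c *\<^sub>R P h" for h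
  have M: "bounded_clinear M"
    unfolding M_def[abs_def] by (intro bounded_clinear_diff bounded_clinear_scaleR T P_lin)
  have "\<exists>z. M z \<noteq> 0"
    using not_multiple by (auto simp: M_def fun_eq_iff)
  then obtain w where "cinner w (M w) \<noteq> 0"
    using quadratic_form_eq_0_imp_zero[OF M] by blast
  moreover have "cinner w (M w) = cinner (P w) (M (P w))"
    by (simp add: M_def TP PT P_idem cinner_diff_right cinner_scaleR_right
        selfadjointD[OF projection_selfadjoint[OF P]] clinear_diff[OF P_lin]
        clinear_scaleR[OF P_lin])
  moreover have "cinner (P w) (M (P w)) = of_real (Re (cinner (P w) (M (P w))))"
    unfolding M_def[abs_def]
    by (rule selfadjoint_quadratic_real[OF selfadjoint_diff[OF T_sa projection_selfadjoint[OF P]]])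
  ultimately have "Re (cinner (P w) (M (P w))) \<noteq> 0" by (metis of_real_0)
  then show ?thesis using that[of "P w"] P_idem by (simp add: M_def)
qed

lemma not_scalar_imp_indefinite:
  fixes P T :: "'a::complex_hilbert \<Rightarrow> 'a"
  assumes P: "is_projection P" and T: "bounded_clinear T" and T_sa: "selfadjoint T"
    and TP: "\<And>h. T (P h) = T h" and PT: "\<And>h. P (T h) = T h"
    and not_scalar: "\<nexists>l. T = (\<lambda>h. scaleC l (P h))"
  obtains c :: real and x y where
    "Re (cinner x (T x - c *\<^sub>R P x)) > 0" "Re (cinner y (T y - c *\<^sub>R P y)) < 0"
proof -
  \<comment> \<open>the Rayleigh quotient of \<open>T\<close> on the range of \<open>P\<close> is not constant\<close>
  define q where "q x = Re (cinner x (T x)) / (norm x)\<^sup>2" for x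
  have shifted: "Re (cinner x (T x - c *\<^sub>R P x)) = (norm x)\<^sup>2 * (q x - c)"
    if "P x = x" "x \<noteq> 0" for x c
    using that by (simp add: q_def cinner_diff_right cinner_scaleR_right Re_cinner_self field_simps)
  have not_multiple: "T \<noteq> (\<lambda>h. c *\<^sub>R P h)" for c
    using not_scalar unfolding scaleR_scaleC by blast
  obtain e where e: "P e = e" "Re (cinner e (T e - 0 *\<^sub>R P e)) \<noteq> 0"
    using compression_quadratic_form_ne[OF P T T_sa TP PT not_multiple] .
  obtain w where w: "P w = w" "Re (cinner w (T w - q e *\<^sub>R P w)) \<noteq> 0"
    using compression_quadratic_form_ne[OF P T T_sa TP PT not_multiple] .
  have "e \<noteq> 0" "w \<noteq> 0" using e w by auto
  then have "q w \<noteq> q e" using shifted w by auto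
  then consider "q w > q e" | "q w < q e" by linarith
  then show ?thesis
  proof cases
    case 1
    then show ?thesis
      using that[where c="(q w + q e) / 2" and x=w and y=e] shifted e w \<open>e \<noteq> 0\<close> \<open>w \<noteq> 0\<close>
      by (simp add: mult_pos_neg)
  next
    case 2
    then show ?thesis
      using that[where c="(q w + q e) / 2" and x=e and y=w] shifted e w \<open>e \<noteq> 0\<close> \<open>w \<noteq> 0\<close>
      by (simp add: mult_pos_neg)
  qed
qed

section \<open>Complex linear spans of operators\<close>

inductive_set op_span :: "('a::complex_hilbert \<Rightarrow> 'a) set \<Rightarrow> ('a \<Rightarrow> 'a) set" for A where
  op_span_zero: "(\<lambda>_. 0) \<in> op_span A"
| op_span_base: "a \<in> A \<Longrightarrow> a \<in> op_span A"
| op_span_add: "f \<in> op_span A \<Longrightarrow> g \<in> op_span A \<Longrightarrow> (\<lambda>h. f h + g h) \<in> op_span A"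
| op_span_scaleC: "f \<in> op_span A \<Longrightarrow> (\<lambda>h. scaleC c (f h)) \<in> op_span A"

lemma op_span_uminus: "f \<in> op_span A \<Longrightarrow> (\<lambda>h. - f h) \<in> op_span A"
  using op_span_scaleC[of f A "-1"] by (simp add: scaleC_minus_left scaleC_one)

lemma op_span_comp_right:
  assumes "f \<in> op_span A" and "\<And>a. a \<in> A \<Longrightarrow> a \<circ> q \<in> op_span A'"
  shows "f \<circ> q \<in> op_span A'"
  using assms(1)
proof induction
  case (op_span_add f g)
  then show ?case using op_span.op_span_add[OF op_span_add.IH] by (simp add: comp_def)
next
  case (op_span_scaleC f c)
  then show ?case using op_span.op_span_scaleC[OF op_span_scaleC.IH] by (simp add: comp_def)
next
  case op_span_zero
  then show ?case using op_span.op_span_zero by (simp add: comp_def)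
qed (rule assms(2))

lemma op_span_comp_left:
  assumes "f \<in> op_span A" and L: "bounded_clinear L" and "\<And>a. a \<in> A \<Longrightarrow> L \<circ> a \<in> op_span A'"
  shows "L \<circ> f \<in> op_span A'"
  using assms(1)
proof induction
  case op_span_zero
  then show ?case using op_span.op_span_zero by (simp add: comp_def clinear_zero[OF L])
next
  case (op_span_add f g)
  then show ?case
    using op_span.op_span_add[OF op_span_add.IH] by (simp add: comp_def clinear_add[OF L])
next
  case (op_span_scaleC f c)
  then show ?case
    using op_span.op_span_scaleC[OF op_span_scaleC.IH] by (simp add: comp_def clinear_scaleC[OF L])
qed (rule assms(3))

lemma op_span_bounded_clinear:
  "f \<in> op_span A \<Longrightarrow> (\<And>a. a \<in> A \<Longrightarrow> bounded_clinear a) \<Longrightarrow> bounded_clinear f"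
  by (induction rule: op_span.induct)
    (auto intro: bounded_clinear_zero bounded_clinear_add bounded_clinear_scaleC)

section \<open>Projections along a graph with anticommuting squares\<close>

text \<open>These axioms make the compression \<open>p u A p u\<close> of the
  generated algebra \<open>A\<close> commutative.\<close>

locale anticommuting_squares =
  fixes X :: "'v set" and p :: "'v \<Rightarrow> 'h::complex_hilbert \<Rightarrow> 'h" and adj :: "'v \<Rightarrow> 'v \<Rightarrow> bool"
    and d :: "'v \<Rightarrow> nat" and u :: 'v
  assumes base_in: "u \<in> X"
    and projection: "x \<in> X \<Longrightarrow> is_projection (p x)"
    and orthogonal: "x \<in> X \<Longrightarrow> y \<in> X \<Longrightarrow> x \<noteq> y \<Longrightarrow> \<not> adj x y \<Longrightarrow> p x (p y h) = 0"
    and adj_in: "adj x y \<Longrightarrow> x \<in> X \<and> y \<in> X"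
    and adj_sym: "adj x y \<Longrightarrow> adj y x"
    and adj_level: "adj x y \<Longrightarrow> d y = d x + 1 \<or> d x = d y + 1"
    and level_base: "d u = 0"
    and square_exists: "adj a b \<Longrightarrow> adj b c \<Longrightarrow> a \<noteq> c \<Longrightarrow> \<exists>b'. adj a b' \<and> adj b' c \<and> b' \<noteq> b"
    and square_anticommute: "adj a b \<Longrightarrow> adj b c \<Longrightarrow> a \<noteq> c \<Longrightarrow> adj a b' \<Longrightarrow> adj b' c \<Longrightarrow> b' \<noteq> b \<Longrightarrow>
       p a (p b (p c h)) = - p a (p b' (p c h))"
    and square_level: "adj a b \<Longrightarrow> adj b c \<Longrightarrow> a \<noteq> c \<Longrightarrow> adj a b' \<Longrightarrow> adj b' c \<Longrightarrow> b' \<noteq> b \<Longrightarrow>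
       int (d b') = int (d a) + int (d c) - int (d b)"
begin

lemma p_bounded_clinear: "x \<in> X \<Longrightarrow> bounded_clinear (p x)"
  using projection projection_bounded_clinear by blast

lemma p_idem: "x \<in> X \<Longrightarrow> p x (p x h) = p x h"
  using projection projection_idem by blast

lemma p_selfadjoint: "x \<in> X \<Longrightarrow> selfadjoint (p x)"
  using projection projection_selfadjoint by blast

lemma p_minus: "x \<in> X \<Longrightarrow> p x (- h) = - p x h"
  by (rule clinear_minus[OF p_bounded_clinear])

lemma p_base_idem: "p u \<circ> p u = p u"
  by (rule ext) (simp add: p_idem[OF base_in])

definition corner :: "'v \<Rightarrow> 'h \<Rightarrow> 'h" where
  "corner v = p u \<circ> p v \<circ> p u"

lemma corner_bounded_clinear: "adj u v \<Longrightarrow> bounded_clinear (corner v)"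
  unfolding corner_def
  by (intro bounded_clinear_comp p_bounded_clinear base_in) (use adj_in in blast)

lemma base_comp_corner: "p u \<circ> corner v = corner v"
  by (rule ext) (simp add: corner_def p_idem[OF base_in])

lemma corner_comp_base: "corner v \<circ> p u = corner v"
  by (rule ext) (simp add: corner_def p_idem[OF base_in])

inductive corner_monomial :: "('h \<Rightarrow> 'h) \<Rightarrow> bool" where
  corner_monomial_base: "corner_monomial (p u)"
| corner_monomial_step: "corner_monomial c \<Longrightarrow> adj u v \<Longrightarrow> corner_monomial (c \<circ> corner v)"

lemma corner_monomial_props:
  "corner_monomial c \<Longrightarrow> bounded_clinear c \<and> p u \<circ> c = c \<and> c \<circ> p u = c"
proof (induction rule: corner_monomial.induct)
  case corner_monomial_base
  then show ?case using p_bounded_clinear[OF base_in] p_base_idem by simp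
next
  case (corner_monomial_step c v)
  then show ?case
    using bounded_clinear_comp[OF _ corner_bounded_clinear] corner_comp_base
    by (metis comp_assoc)
qed

lemma corner_monomial_mult: "corner_monomial c \<Longrightarrow> corner_monomial c' \<Longrightarrow> corner_monomial (c' \<circ> c)"
proof (induction rule: corner_monomial.induct)
  case corner_monomial_base
  then show ?case using corner_monomial_props by simp
next
  case (corner_monomial_step c v)
  then show ?case using corner_monomial.corner_monomial_step by (metis comp_assoc)
qed

inductive geodesic_word :: "'v \<Rightarrow> ('h \<Rightarrow> 'h) \<Rightarrow> bool" where
  geodesic_word_base: "geodesic_word u (p u)"
| geodesic_word_step: "geodesic_word x g \<Longrightarrow> adj x y \<Longrightarrow> d y = d x + 1 \<Longrightarrow> geodesic_word y (g \<circ> p y)"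

lemma geodesic_word_props: "geodesic_word x g \<Longrightarrow> x \<in> X \<and> bounded_clinear g \<and> g \<circ> p x = g"
proof (induction rule: geodesic_word.induct)
  case geodesic_word_base
  then show ?case using base_in p_bounded_clinear[OF base_in] p_base_idem by simp
next
  case (geodesic_word_step x g y)
  then have y: "y \<in> X" using adj_in by blast
  moreover have "bounded_clinear (g \<circ> p y)"
    using geodesic_word_step bounded_clinear_comp[OF _ p_bounded_clinear[OF y]] by blast
  moreover have "g \<circ> p y \<circ> p y = g \<circ> p y"
    by (rule ext) (simp add: p_idem[OF y])
  ultimately show ?case by blast
qed

lemma geodesic_word_at_base: "geodesic_word u g \<Longrightarrow> g = p u"
  by (cases rule: geodesic_word.cases) (auto simp: level_base)

definition monomial_paths :: "'v \<Rightarrow> ('h \<Rightarrow> 'h) set" where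
  "monomial_paths x = {c \<circ> g | c g. corner_monomial c \<and> geodesic_word x g}"

lemma monomial_pathsE:
  assumes "a \<in> monomial_paths x"
  obtains c g where "a = c \<circ> g" "corner_monomial c" "geodesic_word x g"
  using assms unfolding monomial_paths_def by blast

lemma monomial_paths_bounded_clinear: "a \<in> monomial_paths x \<Longrightarrow> bounded_clinear a"
  by (metis monomial_pathsE corner_monomial_props geodesic_word_props bounded_clinear_comp)

lemma op_span_monomial_paths_left:
  assumes "corner_monomial c'" and "Z \<in> op_span (monomial_paths x)"
  shows "c' \<circ> Z \<in> op_span (monomial_paths x)"
proof (rule op_span_comp_left[OF assms(2)])
  show "bounded_clinear c'" using corner_monomial_props[OF assms(1)] by simp
  fix a assume "a \<in> monomial_paths x"
  then obtain c g where a: "a = c \<circ> g" "corner_monomial c" "geodesic_word x g"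
    by (rule monomial_pathsE)
  have "c' \<circ> a = (c' \<circ> c) \<circ> g" using a by (simp add: o_assoc)
  then have "c' \<circ> a \<in> monomial_paths x"
    using corner_monomial_mult[OF a(2) assms(1)] a(3) unfolding monomial_paths_def by blast
  then show "c' \<circ> a \<in> op_span (monomial_paths x)" by (rule op_span_base)
qed

lemma op_span_monomial_paths_forward:
  assumes "Z \<in> op_span (monomial_paths x)" "adj x y" "d y = d x + 1"
  shows "Z \<circ> p y \<in> op_span (monomial_paths y)"
proof (rule op_span_comp_right[OF assms(1)])
  fix a assume "a \<in> monomial_paths x"
  then obtain c g where a: "a = c \<circ> g" "corner_monomial c" "geodesic_word x g"
    by (rule monomial_pathsE)
  then have "geodesic_word y (g \<circ> p y)" using assms by (intro geodesic_word_step)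
  then have "c \<circ> (g \<circ> p y) \<in> monomial_paths y" using a unfolding monomial_paths_def by blast
  then show "a \<circ> p y \<in> op_span (monomial_paths y)" using a by (simp add: o_assoc op_span_base)
qed

lemma op_span_monomial_paths_stay:
  assumes "Z \<in> op_span (monomial_paths x)"
  shows "Z \<circ> p x \<in> op_span (monomial_paths x)"
proof (rule op_span_comp_right[OF assms])
  fix a assume a: "a \<in> monomial_paths x"
  then have "a \<circ> p x = a"
    by (metis monomial_pathsE geodesic_word_props comp_assoc)
  then show "a \<circ> p x \<in> op_span (monomial_paths x)" using a by (simp add: op_span_base)
qed

lemma op_span_monomial_paths_orthogonal:
  assumes "Z \<in> op_span (monomial_paths x)" "y \<in> X" "x \<noteq> y" "\<not> adj x y"
  shows "Z \<circ> p y \<in> op_span (monomial_paths y)"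
proof (rule op_span_comp_right[OF assms(1)])
  fix a assume a: "a \<in> monomial_paths x"
  then obtain c g where "a = c \<circ> g" "geodesic_word x g" by (rule monomial_pathsE)
  then have "(a \<circ> p y) h = a (p x (p y h))" for h
    using geodesic_word_props by (metis comp_apply)
  then have "a \<circ> p y = (\<lambda>_. 0)"
    using orthogonal[OF _ assms(2-4)] geodesic_word_props[OF \<open>geodesic_word x g\<close>]
      clinear_zero[OF monomial_paths_bounded_clinear[OF a]] by auto
  then show "a \<circ> p y \<in> op_span (monomial_paths y)" by (simp add: op_span_zero)
qed

text \<open>Going one step up and back down again: the square through the step rewrites the detour as
  a path that turns around one level lower.\<close>

lemma geodesic_word_return:
  "geodesic_word y g \<Longrightarrow> adj y x \<Longrightarrow> d x = d y + 1 \<Longrightarrow> g \<circ> p x \<circ> p y \<in> op_span (monomial_paths y)"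
proof (induction arbitrary: x rule: geodesic_word.induct)
  case (geodesic_word_base x)
  have "corner_monomial (p u \<circ> corner x)"
    by (rule corner_monomial_step[OF corner_monomial_base geodesic_word_base(1)])
  then have "(p u \<circ> corner x) \<circ> p u \<in> monomial_paths u"
    unfolding monomial_paths_def using geodesic_word.geodesic_word_base by blast
  moreover have "(p u \<circ> corner x) \<circ> p u = p u \<circ> p x \<circ> p u"
    by (simp only: base_comp_corner corner_comp_base) (simp only: corner_def)
  ultimately show ?case by (simp only:) (rule op_span_base)
next
  case (geodesic_word_step t g' y x)
  have ty: "adj t y" and dy: "d y = d t + 1" and yx: "adj y x" and dx: "d x = d y + 1"
    using geodesic_word_step by auto
  have tx: "t \<noteq> x" using dy dx by auto
  obtain y' where ty': "adj t y'" and y'x: "adj y' x" and y'y: "y' \<noteq> y"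
    using square_exists[OF ty yx tx] by blast
  have dy': "d y' = d t + 1" using square_level[OF ty yx tx ty' y'x y'y] dx dy by simp
  have t_in: "t \<in> X" and y'_in: "y' \<in> X" using adj_in ty ty' by auto
  have g': "g' \<circ> p t = g'" using geodesic_word_props[OF geodesic_word_step.hyps(1)] by blast
  have "g' \<circ> p y \<circ> p x \<circ> p y = g' \<circ> p y' \<circ> p t \<circ> p y"
  proof
    fix h
    have "(g' \<circ> p y \<circ> p x \<circ> p y) h = g' (p t (p y (p x (p y h))))"
      using g' by (metis comp_apply)
    also have "\<dots> = g' (p t (p y' (p t (p y h))))"
      using square_anticommute[OF ty yx tx ty' y'x y'y]
        square_anticommute[OF y'x adj_sym[OF yx] y'y adj_sym[OF ty'] ty tx]
      by (simp add: p_minus[OF t_in] p_minus[OF y'_in])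
    also have "\<dots> = (g' \<circ> p y' \<circ> p t \<circ> p y) h"
      using g' by (metis comp_apply)
    finally show "(g' \<circ> p y \<circ> p x \<circ> p y) h = (g' \<circ> p y' \<circ> p t \<circ> p y) h" .
  qed
  moreover have "g' \<circ> p y' \<circ> p t \<in> op_span (monomial_paths t)"
    by (rule geodesic_word_step.IH[OF ty' dy'])
  ultimately show ?case using op_span_monomial_paths_forward[OF _ ty dy] by (simp only:)
qed

lemma geodesic_word_backward:
  "geodesic_word x g \<Longrightarrow> adj x y \<Longrightarrow> d x = d y + 1 \<Longrightarrow> g \<circ> p y \<in> op_span (monomial_paths y)"
proof (induction arbitrary: y rule: geodesic_word.induct)
  case (geodesic_word_base y)
  then show ?case by (simp add: level_base)
next
  case (geodesic_word_step w g' x y)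
  have wx: "adj w x" and dx: "d x = d w + 1" and xy: "adj x y" and dxy: "d x = d y + 1"
    using geodesic_word_step by auto
  show ?case
  proof (cases "y = w")
    case True
    show ?thesis unfolding True by (rule geodesic_word_return[OF geodesic_word_step.hyps(1) wx dx])
  next
    case False
    obtain z where wz: "adj w z" and zy: "adj z y" and zx: "z \<noteq> x"
      using square_exists[OF wx xy] False by metis
    have dz: "d w = d z + 1" "d y = d z + 1"
      using square_level[OF wx xy _ wz zy zx] False dx dxy by auto
    have g': "g' \<circ> p w = g'" "bounded_clinear g'"
      using geodesic_word_props[OF geodesic_word_step.hyps(1)] by auto
    have "g' \<circ> p x \<circ> p y = (\<lambda>h. - (g' \<circ> p z \<circ> p y) h)"
    proof
      fix h
      have "(g' \<circ> p x \<circ> p y) h = g' (p w (p x (p y h)))" using g' by (metis comp_apply)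
      also have "\<dots> = - g' (p w (p z (p y h)))"
        using square_anticommute[OF wx xy _ wz zy zx] False by (simp add: clinear_minus[OF g'(2)])
      also have "\<dots> = - (g' \<circ> p z \<circ> p y) h" using g' by (metis comp_apply)
      finally show "(g' \<circ> p x \<circ> p y) h = - (g' \<circ> p z \<circ> p y) h" .
    qed
    moreover have "g' \<circ> p z \<circ> p y \<in> op_span (monomial_paths y)"
      using op_span_monomial_paths_forward[OF geodesic_word_step.IH[OF wz dz(1)] zy dz(2)] .
    ultimately show ?thesis using op_span_uminus by (simp only:)
  qed
qed

lemma op_span_monomial_paths_backward:
  assumes "Z \<in> op_span (monomial_paths x)" "adj x y" "d x = d y + 1"
  shows "Z \<circ> p y \<in> op_span (monomial_paths y)"
proof (rule op_span_comp_right[OF assms(1)])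
  fix a assume "a \<in> monomial_paths x"
  then obtain c g where a: "a = c \<circ> g" "corner_monomial c" "geodesic_word x g"
    by (rule monomial_pathsE)
  have "c \<circ> (g \<circ> p y) \<in> op_span (monomial_paths y)"
    by (rule op_span_monomial_paths_left[OF a(2) geodesic_word_backward[OF a(3) assms(2,3)]])
  then show "a \<circ> p y \<in> op_span (monomial_paths y)" by (simp only: a o_assoc)
qed

lemma op_span_monomial_paths_step:
  assumes Z: "Z \<in> op_span (monomial_paths x)" and y: "y \<in> X"
  shows "Z \<circ> p y \<in> op_span (monomial_paths y)"
proof -
  consider "y = x" | "adj x y" "d y = d x + 1" | "adj x y" "d x = d y + 1" | "x \<noteq> y" "\<not> adj x y"
    using adj_level by fastforce
  then show ?thesis
  proof cases
    case 1
    then show ?thesis using op_span_monomial_paths_stay[OF Z] by simp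
  next
    case 2
    then show ?thesis by (rule op_span_monomial_paths_forward[OF Z])
  next
    case 3
    then show ?thesis by (rule op_span_monomial_paths_backward[OF Z])
  next
    case 4
    then show ?thesis by (rule op_span_monomial_paths_orthogonal[OF Z y])
  qed
qed

inductive_set words :: "('h \<Rightarrow> 'h) set" where
  words_id: "id \<in> words"
| words_step: "w \<in> words \<Longrightarrow> x \<in> X \<Longrightarrow> w \<circ> p x \<in> words"

lemma words_bounded_clinear: "w \<in> words \<Longrightarrow> bounded_clinear w"
  by (induction rule: words.induct)
    (simp add: id_def bounded_clinear_id, metis bounded_clinear_comp p_bounded_clinear)

lemma base_comp_word_in_span: "w \<in> words \<Longrightarrow> \<exists>x. p u \<circ> w \<in> op_span (monomial_paths x)"
proof (induction rule: words.induct)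
  case words_id
  have "p u \<circ> p u \<in> monomial_paths u"
    unfolding monomial_paths_def using corner_monomial_base geodesic_word_base by blast
  then show ?case using op_span_base p_base_idem by fastforce
next
  case (words_step w y)
  then show ?case using op_span_monomial_paths_step by (metis comp_assoc)
qed

lemma op_span_monomial_paths_base:
  assumes "Z \<in> op_span (monomial_paths u)"
  shows "Z \<in> op_span (Collect corner_monomial)"
proof -
  have "Z \<circ> id \<in> op_span (Collect corner_monomial)"
  proof (rule op_span_comp_right[OF assms])
    fix a assume "a \<in> monomial_paths u"
    then obtain c g where "a = c \<circ> g" "corner_monomial c" "geodesic_word u g"
      by (rule monomial_pathsE)
    then have "a = c" using geodesic_word_at_base corner_monomial_props by blast
    then show "a \<circ> id \<in> op_span (Collect corner_monomial)"
      using \<open>corner_monomial c\<close> by (simp add: op_span_base)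
  qed
  then show ?thesis by simp
qed

lemma compressed_word_in_monomial_span:
  assumes "w \<in> words"
  shows "p u \<circ> w \<circ> p u \<in> op_span (Collect corner_monomial)"
proof -
  obtain x where "p u \<circ> w \<in> op_span (monomial_paths x)"
    using base_comp_word_in_span[OF assms] by blast
  then show ?thesis
    using op_span_monomial_paths_step[OF _ base_in] op_span_monomial_paths_base by blast
qed

lemma corners_commute:
  assumes uv: "adj u v" and uw: "adj u w"
  shows "corner v \<circ> corner w = corner w \<circ> corner v"
proof (cases "v = w")
  case False
  have vu: "adj v u" and wu: "adj w u" using uv uw adj_sym by auto
  obtain u' where vu': "adj v u'" and u'w: "adj u' w" and u'u: "u' \<noteq> u"
    using square_exists[OF vu uw False] by blast
  have u'v: "adj u' v" and wu': "adj w u'" using vu' u'w adj_sym by auto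
  have in_X: "u \<in> X" "v \<in> X" "w \<in> X" "u' \<in> X" using adj_in uv uw vu' by auto
  \<comment> \<open>both products equal \<open>p u p w p u' p w p u\<close>, by going around the square \<open>u v u' w\<close>\<close>
  note sq = square_anticommute[OF vu uw False vu' u'w u'u]
    square_anticommute[OF uv vu' u'u[symmetric] uw wu' False[symmetric]]
    square_anticommute[OF wu uv False[symmetric] wu' u'v u'u]
    square_anticommute[OF u'v vu u'u u'w wu False[symmetric]]
  show ?thesis
  proof
    fix h
    have "(corner v \<circ> corner w) h = p u (p w (p u' (p w (p u h))))"
      using sq by (simp add: corner_def p_idem[OF in_X(1)] p_minus[OF in_X(1)] p_minus[OF in_X(2)])
    also have "\<dots> = (corner w \<circ> corner v) h"
      using sq by (simp add: corner_def p_idem[OF in_X(1)] p_minus[OF in_X(1)] p_minus[OF in_X(3)]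
          p_minus[OF in_X(4)])
    finally show "(corner v \<circ> corner w) h = (corner w \<circ> corner v) h" .
  qed
qed simp

lemma corner_monomial_commute: "corner_monomial c \<Longrightarrow> adj u v \<Longrightarrow> c \<circ> corner v = corner v \<circ> c"
proof (induction rule: corner_monomial.induct)
  case corner_monomial_base
  then show ?case by (simp only: base_comp_corner corner_comp_base)
next
  case (corner_monomial_step c w)
  then show ?case using corners_commute by (metis comp_assoc)
qed

lemma op_span_monomial_commute:
  assumes "Z \<in> op_span (Collect corner_monomial)" and v: "adj u v"
  shows "Z (corner v h) = corner v (Z h)"
  using assms(1)
proof (induction arbitrary: h rule: op_span.induct)
  case op_span_zero
  then show ?case by (simp add: clinear_zero[OF corner_bounded_clinear[OF v]])
next
  case (op_span_base a)
  then show ?case using corner_monomial_commute[OF _ v] by (metis comp_apply mem_Collect_eq)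
next
  case (op_span_add f g)
  then show ?case by (simp add: clinear_add[OF corner_bounded_clinear[OF v]])
next
  case (op_span_scaleC f c)
  then show ?case by (simp add: clinear_scaleC[OF corner_bounded_clinear[OF v]])
qed

lemma op_span_monomial_scalar:
  assumes corner_scalar: "\<And>v. adj u v \<Longrightarrow> \<exists>l. corner v = (\<lambda>h. scaleC l (p u h))"
    and "Z \<in> op_span (Collect corner_monomial)"
  shows "\<exists>m. Z = (\<lambda>h. scaleC m (p u h))"
proof -
  have "\<exists>m. c = (\<lambda>h. scaleC m (p u h))" if "corner_monomial c" for c
    using that
  proof (induction rule: corner_monomial.induct)
    case corner_monomial_base
    then show ?case by (metis scaleC_one)
  next
    case (corner_monomial_step c v)
    then obtain m l where "c = (\<lambda>h. scaleC m (p u h))" "corner v = (\<lambda>h. scaleC l (p u h))"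
      using corner_scalar by blast
    then have "c \<circ> corner v = (\<lambda>h. scaleC (m * l) (p u h))"
      by (simp add: fun_eq_iff clinear_scaleC[OF p_bounded_clinear[OF base_in]] p_idem[OF base_in]
          scaleC_scaleC)
    then show ?case by blast
  qed
  with assms(2) show ?thesis
  proof (induction rule: op_span.induct)
    case op_span_zero
    then show ?case by (metis cvec.scale_zero_left)
  next
    case (op_span_add f g)
    then obtain m1 m2 where "f = (\<lambda>h. scaleC m1 (p u h))" "g = (\<lambda>h. scaleC m2 (p u h))" by blast
    then have "(\<lambda>h. f h + g h) = (\<lambda>h. scaleC (m1 + m2) (p u h))" by (simp add: scaleC_add_left)
    then show ?case by blast
  next
    case (op_span_scaleC f c)
    then obtain m where "f = (\<lambda>h. scaleC m (p u h))" by blast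
    then have "(\<lambda>h. scaleC c (f h)) = (\<lambda>h. scaleC (c * m) (p u h))" by (simp add: scaleC_scaleC)
    then show ?case by blast
  qed simp
qed

end

locale irreducible_anticommuting_squares = anticommuting_squares X p adj d u
  for X :: "'v set" and p :: "'v \<Rightarrow> 'h::complex_hilbert \<Rightarrow> 'h"
    and adj :: "'v \<Rightarrow> 'v \<Rightarrow> bool" and d :: "'v \<Rightarrow> nat" and u :: 'v +
  assumes irreducible: "\<And>K. csubspace K \<Longrightarrow> closed K \<Longrightarrow> (\<forall>x\<in>X. p x ` K \<subseteq> K) \<Longrightarrow> K = {0} \<or> K = UNIV"
begin

lemma orbit_annihilator_zero:
  fixes Phi :: "'h \<Rightarrow> 'r::real_normed_vector"
  assumes Phi: "bounded_linear Phi" and Phi_scaleC: "\<And>a x. Phi x = 0 \<Longrightarrow> Phi (scaleC a x) = 0"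
    and h0: "h0 \<noteq> 0" and annihilated: "\<And>w. w \<in> words \<Longrightarrow> Phi (w h0) = 0"
  shows "Phi h = 0"
proof -
  define K where "K = {h. \<forall>w\<in>words. Phi (w h) = 0}"
  interpret Phi: bounded_linear Phi by (rule Phi)
  note w_lin = words_bounded_clinear
  have "csubspace K"
    unfolding cvec.subspace_def K_def
    by (auto simp: clinear_zero[OF w_lin] clinear_add[OF w_lin] clinear_scaleC[OF w_lin]
        Phi.zero Phi.add Phi_scaleC)
  moreover have "closed K"
  proof -
    have "closed {h. w \<in> words \<longrightarrow> Phi (w h) = 0}" for w
    proof (cases "w \<in> words")
      case True
      then have "continuous_on UNIV (\<lambda>h. Phi (w h))"
        by (intro linear_continuous_on bounded_linear_compose[OF Phi]
            bounded_clinear_imp_bounded_linear w_lin)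
      then show ?thesis using True closed_Collect_eq[of "\<lambda>h. Phi (w h)" "\<lambda>_. 0"] by simp
    qed simp
    then show ?thesis unfolding K_def Ball_def by (rule closed_Collect_all)
  qed
  moreover have "\<forall>x\<in>X. p x ` K \<subseteq> K"
    unfolding K_def using words_step by fastforce
  ultimately have "K = {0} \<or> K = UNIV" by (rule irreducible)
  moreover have "h0 \<in> K" unfolding K_def using annihilated by blast
  ultimately have "h \<in> K" using h0 by auto
  then show ?thesis unfolding K_def using words_id by fastforce
qed

text \<open>A Schur-type argument: the positive and negative parts of an indefinite \<open>S\<close> would
  produce a proper closed invariant subspace.\<close>

lemma commuting_compression_semidefinite:
  assumes S: "bounded_clinear S" and S_sa: "selfadjoint S"
    and S_compl: "\<And>h. S (h - p u h) = 0" and P_S: "\<And>h. p u (S h) = S (p u h)"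
    and S_comm: "\<And>w h. w \<in> words \<Longrightarrow> (p u \<circ> w \<circ> p u) (S h) = S ((p u \<circ> w \<circ> p u) h)"
    and pos: "Re (cinner x (S x)) > 0"
  shows "Re (cinner y (S y)) \<ge> 0"
proof (rule ccontr)
  assume "\<not> Re (cinner y (S y)) \<ge> 0"
  then have neg: "Re (cinner y (S y)) < 0" by simp
  note P_lin = p_bounded_clinear[OF base_in] and P_idem = p_idem[OF base_in]
  obtain F G where F: "bounded_clinear F" and G: "bounded_clinear G" and FG: "\<And>h. F (G h) = 0"
    and "F x \<noteq> 0" "G y \<noteq> 0" and ker: "\<And>h. S h = 0 \<Longrightarrow> F h = 0" "\<And>h. S h = 0 \<Longrightarrow> G h = 0"
    and comm: "\<And>Z h. bounded_clinear Z \<Longrightarrow> (\<And>h. Z (S h) = S (Z h)) \<Longrightarrow> Z (F h) = F (Z h)"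
      "\<And>Z h. bounded_clinear Z \<Longrightarrow> (\<And>h. Z (S h) = S (Z h)) \<Longrightarrow> Z (G h) = G (Z h)"
    by (rule indefinite_selfadjoint_split[OF S S_sa pos neg]) blast
  have F_P: "F h = F (p u h)" for h
    using ker(1)[OF S_compl] by (simp add: clinear_diff[OF F])
  have G_P: "G h = p u (G h)" for h
    using ker(2)[OF S_compl] comm(2)[OF P_lin P_S, of h] by (simp add: clinear_diff[OF G])
  have "F (w (G y)) = 0" if w: "w \<in> words" for w
  proof -
    have Z: "bounded_clinear (p u \<circ> w \<circ> p u)"
      by (intro bounded_clinear_comp P_lin words_bounded_clinear[OF w])
    have "F (w (G y)) = (p u \<circ> w \<circ> p u) (F (G y))"
      using comm(1)[OF Z S_comm[OF w]] F_P G_P by (metis comp_apply)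
    then show ?thesis using FG clinear_zero[OF Z] by simp
  qed
  then have "F x = 0"
    using orbit_annihilator_zero[OF bounded_clinear_imp_bounded_linear[OF F] _ \<open>G y \<noteq> 0\<close>]
    by (simp add: clinear_scaleC[OF F])
  with \<open>F x \<noteq> 0\<close> show False ..
qed

lemma corner_scalar:
  assumes uv: "adj u v"
  shows "\<exists>l. corner v = (\<lambda>h. scaleC l (p u h))"
proof (rule ccontr)
  assume not_scalar: "\<nexists>l. corner v = (\<lambda>h. scaleC l (p u h))"
  note P = projection[OF base_in] and P_lin = p_bounded_clinear[OF base_in]
    and P_idem = p_idem[OF base_in] and T = corner_bounded_clinear[OF uv]
  have T_sa: "selfadjoint (corner v)"
    using p_selfadjoint[OF base_in] p_selfadjoint adj_in[OF uv]
    by (simp add: selfadjoint_def corner_def)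
  have TP: "corner v (p u h) = corner v h" and PT: "p u (corner v h) = corner v h" for h
    by (simp_all add: corner_def P_idem)
  obtain c :: real and x y where
    pos: "Re (cinner x (corner v x - c *\<^sub>R p u x)) > 0" and
    neg: "Re (cinner y (corner v y - c *\<^sub>R p u y)) < 0"
    using not_scalar_imp_indefinite[OF P T T_sa TP PT not_scalar] .
  define S where "S h = corner v h - c *\<^sub>R p u h" for h
  have "Re (cinner y (S y)) \<ge> 0"
  proof (rule commuting_compression_semidefinite)
    show "bounded_clinear S"
      unfolding S_def[abs_def] by (intro bounded_clinear_diff bounded_clinear_scaleR T P_lin)
    show "selfadjoint S"
      unfolding S_def[abs_def] by (rule selfadjoint_diff[OF T_sa p_selfadjoint[OF base_in]])
    show "S (h - p u h) = 0" "p u (S h) = S (p u h)" for h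
      by (simp_all add: S_def clinear_diff[OF T] clinear_diff[OF P_lin] clinear_scaleR[OF P_lin]
          TP PT P_idem scaleR_diff_right)
    show "(p u \<circ> w \<circ> p u) (S h) = S ((p u \<circ> w \<circ> p u) h)" if w: "w \<in> words" for w h
    proof -
      define Z where "Z = p u \<circ> w \<circ> p u"
      have Z_span: "Z \<in> op_span (Collect corner_monomial)"
        unfolding Z_def by (rule compressed_word_in_monomial_span[OF w])
      have Z: "bounded_clinear Z"
        using op_span_bounded_clinear[OF Z_span] corner_monomial_props by blast
      have "Z (p u h) = Z h" "p u (Z h) = Z h" for h by (simp_all add: Z_def P_idem)
      then have "Z (S h) = S (Z h)"
        using op_span_monomial_commute[OF Z_span uv, of h]
        by (simp add: S_def clinear_diff[OF Z] clinear_scaleR[OF Z])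
      then show ?thesis by (simp only: Z_def)
    qed
    show "Re (cinner x (S x)) > 0" using pos by (simp add: S_def)
  qed
  with neg show False by (simp add: S_def)
qed

lemma compressed_word_scalar: "w \<in> words \<Longrightarrow> \<exists>m. p u \<circ> w \<circ> p u = (\<lambda>h. scaleC m (p u h))"
  by (rule op_span_monomial_scalar[OF corner_scalar compressed_word_in_monomial_span])

lemma range_base_subset_span_singleton: "\<exists>e. range (p u) \<subseteq> cvec.span {e}"
proof (cases "\<forall>h. p u h = 0")
  case True
  then show ?thesis by (auto simp: cvec.span_zero)
next
  case False
  then obtain e where "p u e \<noteq> 0" by blast
  define e1 where "e1 = p u e"
  have e1: "e1 \<noteq> 0" "p u e1 = e1" using \<open>p u e \<noteq> 0\<close> by (simp_all add: e1_def p_idem[OF base_in])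
  note P_lin = p_bounded_clinear[OF base_in]
  have "f \<in> cvec.span {e1}" if "f \<in> range (p u)" for f
  proof -
    have f: "p u f = f" using that p_idem[OF base_in] by auto
    define t where "t = cinner e1 f / cinner e1 e1"
    define f' where "f' = f - scaleC t e1"
    have orth: "cinner f' e1 = 0"
      using e1 by (subst cinner_commute)
        (simp add: f'_def cinner_diff_right cinner_scaleC_right t_def)
    have f': "p u f' = f'"
      by (simp add: f'_def clinear_diff[OF P_lin] clinear_scaleC[OF P_lin] f e1)
    \<comment> \<open>\<open>\<langle>f', p u w e1\<rangle> = 0\<close> for all words \<open>w\<close>, as \<open>p u w p u\<close> is a multiple of \<open>p u\<close>\<close>
    have "cinner f' (p u f') = 0"
    proof (rule orbit_annihilator_zero[where Phi="\<lambda>h. cinner f' (p u h)", OF _ _ e1(1)])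
      show "bounded_linear (\<lambda>h. cinner f' (p u h))"
        by (rule bounded_linear_compose[OF bounded_linear_cinner_right
              bounded_clinear_imp_bounded_linear[OF P_lin]])
      show "cinner f' (p u (scaleC a x)) = 0" if "cinner f' (p u x) = 0" for a x
        using that by (simp add: clinear_scaleC[OF P_lin] cinner_scaleC_right)
      show "cinner f' (p u (w e1)) = 0" if w: "w \<in> words" for w
      proof -
        obtain m where "p u \<circ> w \<circ> p u = (\<lambda>h. scaleC m (p u h))"
          using compressed_word_scalar[OF w] by blast
        then have "p u (w e1) = scaleC m e1" using e1 by (metis comp_apply)
        then show ?thesis by (simp add: cinner_scaleC_right orth)
      qed
    qed
    then have "f' = 0" using f' by simp
    then show ?thesis by (simp add: f'_def cvec.span_scale cvec.span_base)
  qed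
  then show ?thesis by blast
qed

end

section \<open>The hypercube\<close>

lemma flip_bit_less_two_power:
  assumes x: "x < 2 ^ n" and k: "k < n"
  shows "flip_bit k x < (2::nat) ^ n"
proof -
  have "take_bit n (flip_bit k x) = flip_bit k (take_bit n x)"
    using k by (simp add: take_bit_flip_bit_eq)
  also have "take_bit n x = x" using x by (simp add: take_bit_nat_eq_self_iff)
  finally show ?thesis by (simp add: take_bit_nat_eq_self_iff[symmetric])
qed

lemma flip_bit_flip_bit: "flip_bit k (flip_bit k (x::nat)) = x"
  by (rule bit_eqI) (auto simp: bit_flip_bit_iff)

lemma flip_bit_commute: "flip_bit i (flip_bit j (x::nat)) = flip_bit j (flip_bit i x)"
  by (rule bit_eqI) (auto simp: bit_flip_bit_iff)

lemma flip_bit_inj: "flip_bit i (x::nat) = flip_bit j x \<longleftrightarrow> i = j"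
proof
  assume "flip_bit i x = flip_bit j x"
  then have "bit (flip_bit i x) i = bit (flip_bit j x) i" by simp
  then show "i = j" by (auto simp: bit_flip_bit_iff)
qed simp

lemma flip_bit_two_step_cases:
  assumes "i \<noteq> j" and "flip_bit l (flip_bit k (a::nat)) = flip_bit j (flip_bit i a)"
  shows "k = i \<or> k = j"
proof (rule ccontr)
  assume k: "\<not> (k = i \<or> k = j)"
  have "bit (flip_bit l (flip_bit k a)) m = bit (flip_bit j (flip_bit i a)) m" for m
    using assms(2) by simp
  from this[of i] this[of k] show False
    using k assms(1) by (auto simp: bit_flip_bit_iff split: if_splits)
qed

lemma par_01: "par k x = 0 \<or> par k x = 1"
  unfolding par_def by auto

lemma par_flip_bit:
  assumes k: "k < n"
  shows "par (n - 1) (flip_bit k x) = 1 - par (n - 1) x"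
proof -
  let ?f = "\<lambda>y l. if bit y l then 1 else (0::nat)"
  have k_in: "k \<in> {..n - 1}" using k by simp
  have rest: "(\<Sum>l\<in>{..n - 1} - {k}. ?f (flip_bit k x) l) = (\<Sum>l\<in>{..n - 1} - {k}. ?f x l)"
    by (rule sum.cong) (auto simp: bit_flip_bit_iff)
  have "(\<Sum>l\<le>n - 1. ?f (flip_bit k x) l) = ?f (flip_bit k x) k + (\<Sum>l\<in>{..n - 1} - {k}. ?f x l)"
    using sum.remove[OF _ k_in, of "?f (flip_bit k x)"] rest by simp
  moreover have "(\<Sum>l\<le>n - 1. ?f x l) = ?f x k + (\<Sum>l\<in>{..n - 1} - {k}. ?f x l)"
    using sum.remove[OF _ k_in, of "?f x"] by simp
  ultimately show ?thesis
    unfolding par_def by (cases "bit x k") (auto simp: bit_flip_bit_iff, presburger+)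
qed

lemma hcU_Un_hcV: "hcU n \<union> hcV n = {..<2 ^ n}"
  unfolding hcU_def hcV_def using par_01 by auto

lemma card_hcU:
  assumes n: "n \<ge> 1"
  shows "card (hcU n) = 2 ^ (n - 1)"
proof -
  have "bij_betw (flip_bit 0) (hcU n) (hcV n)"
  proof (rule bij_betwI[where g="flip_bit 0"])
    show "flip_bit 0 \<in> hcU n \<rightarrow> hcV n" "flip_bit 0 \<in> hcV n \<rightarrow> hcU n"
      using n par_flip_bit[of 0 n] flip_bit_less_two_power[of _ n 0] by (auto simp: hcU_def hcV_def)
  qed (simp_all add: flip_bit_flip_bit)
  then have "card (hcU n) = card (hcV n)" by (rule bij_betw_same_card)
  moreover have "card (hcU n \<union> hcV n) = card (hcU n) + card (hcV n)"
    by (rule card_Un_disjoint) (auto simp: hcU_def hcV_def)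
  moreover have "(2::nat) ^ n = 2 * 2 ^ (n - 1)"
    using n by (metis Suc_diff_1 less_le_trans zero_less_one power_Suc)
  ultimately show ?thesis by (simp add: hcU_Un_hcV)
qed

definition cube_adj :: "nat \<Rightarrow> nat \<Rightarrow> nat \<Rightarrow> bool" where
  "cube_adj n x y \<longleftrightarrow> x < 2 ^ n \<and> y < 2 ^ n \<and> (\<exists>k<n. y = flip_bit k x)"

lemma cube_adj_sym: "cube_adj n x y \<Longrightarrow> cube_adj n y x"
  unfolding cube_adj_def by (auto simp: flip_bit_flip_bit)

lemma cube_adj_par: "cube_adj n x y \<Longrightarrow> par (n - 1) y = 1 - par (n - 1) x"
  unfolding cube_adj_def using par_flip_bit by auto

lemma cube_adj_iff_hc_adj: "u < 2 ^ n \<Longrightarrow> v < 2 ^ n \<Longrightarrow> cube_adj n u v \<longleftrightarrow> hc_adj n u v"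
  unfolding hc_adj_def cube_adj_def by auto

lemma cube_two_step:
  assumes "cube_adj n a b" "cube_adj n b c" "a \<noteq> c"
  obtains i j where "i < n" "j < n" "i \<noteq> j" "b = flip_bit i a" "c = flip_bit j (flip_bit i a)"
proof -
  obtain i j where "i < n" "b = flip_bit i a" "j < n" "c = flip_bit j b"
    using assms(1,2) unfolding cube_adj_def by blast
  moreover have "i \<noteq> j" using calculation assms(3) flip_bit_flip_bit by auto
  ultimately show ?thesis using that by blast
qed

lemma cube_square_opposite:
  assumes "cube_adj n a b" "cube_adj n b c" "a \<noteq> c" "cube_adj n a b'" "cube_adj n b' c" "b' \<noteq> b"
  obtains i j where "i < n" "j < n" "i \<noteq> j" "b = flip_bit i a" "b' = flip_bit j a"
    "c = flip_bit j (flip_bit i a)"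
proof -
  obtain i j where ij: "i < n" "j < n" "i \<noteq> j" "b = flip_bit i a" "c = flip_bit j (flip_bit i a)"
    using cube_two_step[OF assms(1-3)] .
  obtain k l where k: "b' = flip_bit k a" "c = flip_bit l b'"
    using assms(4,5) unfolding cube_adj_def by blast
  then have "k = i \<or> k = j" using flip_bit_two_step_cases[OF ij(3), of l k a] ij(5) by simp
  moreover have "k \<noteq> i" using assms(6) ij(4) k(1) by auto
  ultimately show ?thesis using that ij k(1) by blast
qed

lemma cube_common_neighbours:
  assumes "cube_adj n a b" "cube_adj n b c" "a \<noteq> c" "cube_adj n a b'" "cube_adj n b' c" "b' \<noteq> b"
    and "cube_adj n a y" "cube_adj n y c"
  shows "y = b \<or> y = b'"
proof -
  obtain i j where ij: "i \<noteq> j" "b = flip_bit i a" "b' = flip_bit j a"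
      "c = flip_bit j (flip_bit i a)"
    using cube_square_opposite[OF assms(1-6)] by metis
  obtain k l where k: "y = flip_bit k a" "c = flip_bit l y"
    using assms(7,8) unfolding cube_adj_def by blast
  then have "k = i \<or> k = j" using flip_bit_two_step_cases[OF ij(1), of l k a] ij(4) by simp
  then show ?thesis using ij k(1) by auto
qed

lemma cube_square_exists:
  assumes "cube_adj n a b" "cube_adj n b c" "a \<noteq> c"
  shows "\<exists>b'. cube_adj n a b' \<and> cube_adj n b' c \<and> b' \<noteq> b"
proof -
  obtain i j where ij: "i < n" "j < n" "i \<noteq> j" "b = flip_bit i a" "c = flip_bit j (flip_bit i a)"
    using cube_two_step[OF assms] .
  have "a < 2 ^ n" "c < 2 ^ n" using assms unfolding cube_adj_def by auto
  then have "cube_adj n a (flip_bit j a) \<and> cube_adj n (flip_bit j a) c \<and> flip_bit j a \<noteq> b"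
    unfolding cube_adj_def using ij flip_bit_less_two_power[of a n j] flip_bit_commute[of i j a]
    by (auto simp: flip_bit_inj)
  then show ?thesis by blast
qed

definition hamming_dist :: "nat \<Rightarrow> nat \<Rightarrow> nat \<Rightarrow> nat" where
  "hamming_dist n u x = card {m. m < n \<and> bit x m \<noteq> bit u m}"

lemma hamming_dist_flip_bit:
  assumes k: "k < n"
  shows "int (hamming_dist n u (flip_bit k x)) =
    int (hamming_dist n u x) + (if bit x k = bit u k then 1 else -1)"
proof -
  let ?A = "{m. m < n \<and> bit x m \<noteq> bit u m}"
  let ?B = "{m. m < n \<and> bit (flip_bit k x) m \<noteq> bit u m}"
  show ?thesis
  proof (cases "bit x k = bit u k")
    case True
    then have "?B = insert k ?A" "k \<notin> ?A" using k by (auto simp: bit_flip_bit_iff)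
    then show ?thesis using True by (simp add: hamming_dist_def)
  next
    case False
    then have "?B = ?A - {k}" "k \<in> ?A" using k by (auto simp: bit_flip_bit_iff)
    moreover have "card ?A \<ge> 1"
      using \<open>k \<in> ?A\<close> by (metis One_nat_def Suc_leI card_gt_0_iff empty_iff finite_Collect_conjI
          finite_Collect_less_nat)
    ultimately show ?thesis using False by (simp add: hamming_dist_def of_nat_diff)
  qed
qed

lemma cube_adj_hamming_dist:
  assumes "cube_adj n x y"
  shows "hamming_dist n u y = hamming_dist n u x + 1 \<or> hamming_dist n u x = hamming_dist n u y + 1"
proof -
  obtain k where "k < n" "y = flip_bit k x" using assms unfolding cube_adj_def by blast
  then show ?thesis using hamming_dist_flip_bit[of k n u x] by (cases "bit x k = bit u k") auto
qed

lemma hamming_dist_square: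
  assumes "i < n" "j < n" "i \<noteq> j"
  shows "int (hamming_dist n u (flip_bit j a)) = int (hamming_dist n u a)
    + int (hamming_dist n u (flip_bit j (flip_bit i a))) - int (hamming_dist n u (flip_bit i a))"
proof -
  have "bit (flip_bit j a) i = bit a i" using assms by (simp add: bit_flip_bit_iff)
  then show ?thesis
    using hamming_dist_flip_bit[OF assms(1), of u a] hamming_dist_flip_bit[OF assms(2), of u a]
      hamming_dist_flip_bit[OF assms(1), of u "flip_bit j a"] flip_bit_commute[of j i a]
    by (simp split: if_splits)
qed

context
  fixes n :: nat and p :: "nat \<Rightarrow> 'h::complex_hilbert \<Rightarrow> 'h"
  assumes rep: "hc_rep n p"
begin

lemma hc_rep_projection: "x < 2 ^ n \<Longrightarrow> is_projection (p x)"
  using rep hcU_Un_hcV[of n] unfolding hc_rep_def by blast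

lemma hc_rep_side_sum: "x < 2 ^ n \<Longrightarrow> (\<Sum>y | y < 2 ^ n \<and> par (n - 1) y = par (n - 1) x. p y h) = h"
  using rep par_01[of "n - 1" x] unfolding hc_rep_def hcU_def hcV_def by auto

lemma hc_rep_orthogonal:
  assumes x: "x < 2 ^ n" and y: "y < 2 ^ n" and xy: "x \<noteq> y" and not_adj: "\<not> cube_adj n x y"
  shows "p x (p y h) = 0"
proof (cases "par (n - 1) x = par (n - 1) y")
  case True
  show ?thesis
  proof (rule projection_sum_orthogonal[OF _ _ hc_rep_side_sum[OF x] _ _ xy])
    show "x \<in> {y. y < 2 ^ n \<and> par (n - 1) y = par (n - 1) x}"
      "y \<in> {y. y < 2 ^ n \<and> par (n - 1) y = par (n - 1) x}"
      using x y True by simp_all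
  qed (simp_all add: hc_rep_projection)
next
  case False
  then consider "x \<in> hcU n" "y \<in> hcV n" | "x \<in> hcV n" "y \<in> hcU n"
    using x y par_01[of "n - 1" x] par_01[of "n - 1" y] unfolding hcU_def hcV_def by auto
  then show ?thesis
  proof cases
    case 1
    then show ?thesis
      using rep not_adj cube_adj_iff_hc_adj[OF x y] unfolding hc_rep_def by blast
  next
    case 2
    \<comment> \<open>the relation only constrains \<open>p u p v\<close> for \<open>u \<in> U\<close>; take adjoints\<close>
    then have "p y (p x k) = 0" for k
      using rep not_adj cube_adj_iff_hc_adj[OF y x] cube_adj_sym unfolding hc_rep_def by blast
    moreover have "cinner (p x (p y h)) (p x (p y h)) = cinner h (p y (p x (p x (p y h))))"
      using projection_selfadjoint[OF hc_rep_projection[OF x]]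
        projection_selfadjoint[OF hc_rep_projection[OF y]]
      by (simp add: selfadjointD)
    ultimately show ?thesis by simp
  qed
qed

lemma hc_rep_square_anticommute:
  assumes ab: "cube_adj n a b" and bc: "cube_adj n b c" and ac: "a \<noteq> c"
    and ab': "cube_adj n a b'" and b'c: "cube_adj n b' c" and bb': "b' \<noteq> b"
  shows "p a (p b (p c h)) = - p a (p b' (p c h))"
proof -
  have a: "a < 2 ^ n" and b: "b < 2 ^ n" and c: "c < 2 ^ n" and b': "b' < 2 ^ n"
    using ab bc ab' unfolding cube_adj_def by auto
  note pa = projection_bounded_clinear[OF hc_rep_projection[OF a]]
  define S where "S = {y. y < 2 ^ n \<and> par (n - 1) y = par (n - 1) b}"
  have par_c: "par (n - 1) c = par (n - 1) a" and par_b: "par (n - 1) b = 1 - par (n - 1) a"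
    using cube_adj_par[OF ab] cube_adj_par[OF bc] par_01[of "n - 1" a] by auto
  have "b \<in> S" "b' \<in> S"
    using b b' par_b cube_adj_par[OF ab'] unfolding S_def by auto
  \<comment> \<open>insert the partition of unity on the side of \<open>b\<close> between \<open>p a\<close> and \<open>p c\<close>; only the two
    common neighbours \<open>b\<close> and \<open>b'\<close> of \<open>a\<close> and \<open>c\<close> contribute\<close>
  have "(\<Sum>y\<in>S. p a (p y (p c h))) = p a (p c h)"
    using clinear_sum[OF pa, of "\<lambda>y. p y (p c h)" S] hc_rep_side_sum[OF b, of "p c h"]
    by (simp add: S_def)
  also have "\<dots> = 0"
  proof (rule hc_rep_orthogonal[OF a c ac])
    show "\<not> cube_adj n a c" using cube_adj_par[of n a c] par_c par_01[of "n - 1" a] by auto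
  qed
  also have "(\<Sum>y\<in>S. p a (p y (p c h))) = (\<Sum>y\<in>{b, b'}. p a (p y (p c h)))"
  proof (rule sum.mono_neutral_right)
    show "finite S" by (simp add: S_def)
    show "{b, b'} \<subseteq> S" using \<open>b \<in> S\<close> \<open>b' \<in> S\<close> by simp
    show "\<forall>y\<in>S - {b, b'}. p a (p y (p c h)) = 0"
    proof
      fix y assume y: "y \<in> S - {b, b'}"
      then have y_in: "y < 2 ^ n" and "y \<noteq> a" "y \<noteq> c"
        using par_b par_c par_01[of "n - 1" a] unfolding S_def by auto
      have "\<not> cube_adj n a y \<or> \<not> cube_adj n y c"
        using cube_common_neighbours[OF ab bc ac ab' b'c bb'] y by blast
      then show "p a (p y (p c h)) = 0"
        using hc_rep_orthogonal[OF a y_in \<open>y \<noteq> a\<close>[symmetric]] hc_rep_orthogonal[OF y_in c \<open>y \<noteq> c\<close>]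
          clinear_zero[OF pa] by auto
    qed
  qed
  finally show ?thesis using bb' by (simp add: eq_neg_iff_add_eq_0)
qed

lemma hc_rep_irreducible_squares:
  assumes irr: "hc_irreducible n p" and x0: "x0 < 2 ^ n"
  shows "irreducible_anticommuting_squares {..<2 ^ n} p (cube_adj n) (hamming_dist n x0) x0"
proof unfold_locales
  show "x0 \<in> {..<2 ^ n}" using x0 by simp
  show "is_projection (p x)" if "x \<in> {..<2 ^ n}" for x using hc_rep_projection that by simp
  show "p x (p y h) = 0" if "x \<in> {..<2 ^ n}" "y \<in> {..<2 ^ n}" "x \<noteq> y" "\<not> cube_adj n x y" for x y h
    using hc_rep_orthogonal that by simp
  show "x \<in> {..<2 ^ n} \<and> y \<in> {..<2 ^ n}" if "cube_adj n x y" for x y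
    using that unfolding cube_adj_def by simp
  show "cube_adj n y x" if "cube_adj n x y" for x y using cube_adj_sym that .
  show "hamming_dist n x0 y = hamming_dist n x0 x + 1 \<or>
      hamming_dist n x0 x = hamming_dist n x0 y + 1"
    if "cube_adj n x y" for x y using cube_adj_hamming_dist that .
  show "hamming_dist n x0 x0 = 0" by (simp add: hamming_dist_def)
  show "\<exists>b'. cube_adj n a b' \<and> cube_adj n b' c \<and> b' \<noteq> b"
    if "cube_adj n a b" "cube_adj n b c" "a \<noteq> c" for a b c using cube_square_exists that .
  show "p a (p b (p c h)) = - p a (p b' (p c h))"
    if "cube_adj n a b" "cube_adj n b c" "a \<noteq> c" "cube_adj n a b'" "cube_adj n b' c" "b' \<noteq> b"
    for a b c b' h using hc_rep_square_anticommute that .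
  show "int (hamming_dist n x0 b') =
      int (hamming_dist n x0 a) + int (hamming_dist n x0 c) - int (hamming_dist n x0 b)"
    if sq: "cube_adj n a b" "cube_adj n b c" "a \<noteq> c" "cube_adj n a b'" "cube_adj n b' c" "b' \<noteq> b"
    for a b c b'
  proof -
    obtain i j where "i < n" "j < n" "i \<noteq> j" "b = flip_bit i a" "b' = flip_bit j a"
      "c = flip_bit j (flip_bit i a)"
      using cube_square_opposite[OF sq] .
    then show ?thesis using hamming_dist_square[of i n j x0 a] by simp
  qed
  show "K = {0} \<or> K = UNIV"
    if "csubspace K" "closed K" "\<forall>x\<in>{..<2 ^ n}. p x ` K \<subseteq> K" for K
    using irr that unfolding hc_irreducible_def hcU_Un_hcV by simp
qed

end

theorem theorem3p5:
  fixes n :: nat and p :: "nat \<Rightarrow> 'h::complex_hilbert \<Rightarrow> 'h"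
  assumes "n \<ge> 1"
    and "hc_rep n p"
    and "hc_irreducible n p"
  shows "hdim_le (UNIV :: 'h set) (2 ^ (n - 1)) \<and>
         (\<forall>x \<in> hcU n \<union> hcV n. hdim_le (range (p x)) 1)"
proof -
  have rank_1: "\<exists>e. range (p x) \<subseteq> cvec.span {e}" if "x \<in> hcU n \<union> hcV n" for x
    using that unfolding hcU_Un_hcV
    by (intro irreducible_anticommuting_squares.range_base_subset_span_singleton[OF
          hc_rep_irreducible_squares[OF assms(2,3)]]) simp
  have "hdim_le (UNIV :: 'h set) (card (hcU n))"
    by (rule hdim_le_of_rank_one_partition[where P=p])
      (use assms(2) rank_1 in \<open>auto simp: hc_rep_def hcU_def\<close>)
  moreover have "hdim_le (range (p x)) 1" if "x \<in> hcU n \<union> hcV n" for x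
    using rank_1[OF that] hdim_le_of_subset_span[of "{e}" "range (p x)" 1 for e] by auto
  ultimately show ?thesis using card_hcU[OF assms(1)] by simp
qed

end
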